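(* Let $r,n\ge1$ and let $\mathbf f=(f_1,\dots,f_n)$ be integers with $1\le f_1\le f_2\le\cdots\le f_n\le n$. Over $\mathsf{G}_{r,n,\mathbf f}$, the tuple of (set-valued) statistics $$\bigl(\ell,\mathsf{Rmil}^0,\mathsf{Rmil}^1,\dots,\mathsf{Rmil}^{r-1},\mathsf{Lmil}^0,\dots,\mathsf{Lmil}^{r-1},\mathsf{Lmal}^0,\dots,\mathsf{Lmal}^{r-1},\mathsf{Lmap}^0,\dots,\mathsf{Lmap}^{r-1}\bigr)$$ and the tuple $$\bigl(\mathsf{sor},\mathsf{Cyc}^0,\mathsf{Cyc}^{r-1},\dots,\mathsf{Cyc}^{1},\mathsf{Lmic}^0,\mathsf{Lmic}^{r-1},\dots,\mathsf{Lmic}^1,\mathsf{Lmal}^0,\mathsf{Lmal}^{r-1},\dots,\mathsf{Lmal}^1,\mathsf{Lmap}^0,\mathsf{Lmap}^{r-1},\dots,\mathsf{Lmap}^1\bigr)$$ have the same joint distribution: for every possible value $v$, the number of $\pi\in\mathsf{G}_{r,n,\mathbf f}$ at which the first tuple equals $v$ equals the number of $\pi\in\mathsf{G}_{r,n,\mathbf f}$ at which the second tuple equals $v$.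
   Context: $\mathsf{G}_{r,n}=C_r\wr\mathfrak S_n$: pairs $(\sigma,\mathbf z)$, $\sigma\in\mathfrak S_n$, $\mathbf z\in(\mathbb Z/r)^n$, written $\pi=\sigma_1^{[z_1]}\cdots\sigma_n^{[z_n]}$ (colors in $\{0,\dots,r-1\}$, read mod $r$); product $(\sigma,\mathbf z)(\rho,\mathbf w)=(\sigma\rho,\mathbf w+\rho(\mathbf z))$ with $\rho(\mathbf z)=(z_{\rho(1)},\dots,z_{\rho(n)})$; $\pi$ acts on $\{i^{[t]}\}$ by $\pi(i^{[t]})=\sigma_i^{[z_i+t]}$, $i^{[0]}=i$. $\mathsf{G}_{r,n,\mathbf f}=\{(\sigma,\mathbf z)\in\mathsf{G}_{r,n}:\sigma(i)\le f_i\ \forall i\}$ (colored permutations on a Ferrers shape). $\ell(\pi)$: minimal number of factors in an expression of $\pi$ as a product of $s_0=1^{[1]}2\cdots n$ and $s_i$ ($1\le i<n$: base permutation $(i\ i+1)$, all colors $0$). $\mathsf{sor}(\pi)$ (sorting index): set $\pi^{(n)}=\pi$; for $j=n,\dots,1$ let $c_j$ be the position of the letter with base value $j$ in the length-$j$ word $\pi^{(j)}=\tau_1^{[y_1]}\cdots\tau_j^{[y_j]}$, $z$ its color, $e_j\in\{0,\dots,r-1\}$ with $e_j\equiv-z$; if $c_j<j$, $\pi^{(j-1)}$ is obtained by replacing the letter at position $c_j$ by $\tau_j^{[y_j-e_j]}$ and deleting the last letter; if $c_j=j$, by deleting the last letter. Then $\mathsf{sor}(\pi)=\sum_j\bigl(j-c_j+\chi(e_j>0)(2(c_j-1)+e_j)\bigr)$,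 $\chi$ the indicator. Statistics: $\mathsf{Rmil}(\pi)=\{\sigma_i^{[z_i]}:\sigma_i<\sigma_j\,\forall j>i\}$, $\mathsf{Lmil}(\pi)=\{\sigma_i^{[z_i]}:\sigma_i<\sigma_j\,\forall j<i\}$, $\mathsf{Lmal}(\pi)=\{\sigma_i^{[z_i]}:\sigma_i>\sigma_j\,\forall j<i\}$, $\mathsf{Lmap}(\pi)=\{i^{[z_i]}:\sigma_i>\sigma_j\,\forall j<i\}$; $\mathsf{Cyc}(\pi)$ = set of $\alpha^{[c]}$ over cycles of $\sigma$ with element set $B$, $\alpha=\min B$, $c\equiv\sum_{k\in B}z_k\pmod r$; $\mathsf{Lmic}(\pi)$ = set of letters of the word $\pi(1)\pi^2(1)\cdots\pi^m(1)$ ($m\ge1$ least with $\pi^m(1)=1$) whose base value is smaller than the base values of all earlier letters. For a set $S$ of colored letters, $S^t=\{k:k^{[t]}\in S\}$. *)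

theory Defs
  imports "HOL-Combinatorics.Permutations"
begin

text \<open>A colored permutation of G_{r,n} is a pair (sigma, z): sigma permutes {1..n}
 (identity outside), z i in {0..r-1} is the color of position i (z i = 0 outside {1..n}).\<close>

type_synonym cperm = "(nat \<Rightarrow> nat) \<times> (nat \<Rightarrow> nat)"

definition Grn :: "nat \<Rightarrow> nat \<Rightarrow> cperm set" where
  "Grn r n = {(\<sigma>, z). \<sigma> permutes {1..n} \<and> (\<forall>i\<in>{1..n}. z i < r)
                    \<and> (\<forall>i. i \<notin> {1..n} \<longrightarrow> z i = 0)}"

definition Grnf :: "nat \<Rightarrow> nat \<Rightarrow> (nat \<Rightarrow> nat) \<Rightarrow> cperm set" where
  "Grnf r n f = {(\<sigma>, z) \<in> Grn r n. \<forall>i\<in>{1..n}. \<sigma> i \<le> f i}"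

text \<open>Product (sigma,z)(rho,w) = (sigma rho, w + rho(z)), rho(z)_i = z_{rho(i)}.\<close>
definition cmult :: "nat \<Rightarrow> cperm \<Rightarrow> cperm \<Rightarrow> cperm" where
  "cmult r p q = (fst p \<circ> fst q, \<lambda>i. (snd q i + snd p (fst q i)) mod r)"

definition cident :: cperm where
  "cident = (id, \<lambda>_. 0)"

definition gen0 :: "nat \<Rightarrow> cperm" where
  "gen0 r = (id, \<lambda>i. if i = 1 then 1 mod r else 0)"

definition geni :: "nat \<Rightarrow> cperm" where
  "geni i = ((\<lambda>j. if j = i then i + 1 else if j = i + 1 then i else j), \<lambda>_. 0)"

definition gens :: "nat \<Rightarrow> nat \<Rightarrow> cperm set" where
  "gens r n = insert (gen0 r) (geni ` {1..<n})"

definition clength :: "nat \<Rightarrow> nat \<Rightarrow> cperm \<Rightarrow> nat" where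
  "clength r n \<pi> = (LEAST k. \<exists>ws. length ws = k \<and> set ws \<subseteq> gens r n
                              \<and> foldr (cmult r) ws cident = \<pi>)"

text \<open>Sorting index: the word pi^(j) is given by base values tau and colors y on positions 1..j.\<close>
fun sor_rec :: "nat \<Rightarrow> nat \<Rightarrow> (nat \<Rightarrow> nat) \<Rightarrow> (nat \<Rightarrow> nat) \<Rightarrow> nat" where
  "sor_rec r 0 \<tau> y = 0"
| "sor_rec r (Suc k) \<tau> y =
    (let j = Suc k;
         c = (THE p. p \<in> {1..j} \<and> \<tau> p = j);
         e = (r - y c mod r) mod r;
         \<tau>' = (if c < j then \<tau>(c := \<tau> j) else \<tau>);
         y' = (if c < j then y(c := (y j + r - e) mod r) else y)
     in (j - c) + (if e > 0 then 2 * (c - 1) + e else 0) + sor_rec r k \<tau>' y')"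

definition sor :: "nat \<Rightarrow> nat \<Rightarrow> cperm \<Rightarrow> nat" where
  "sor r n \<pi> = sor_rec r n (fst \<pi>) (snd \<pi>)"

definition Rmil :: "nat \<Rightarrow> cperm \<Rightarrow> nat \<Rightarrow> nat set" where
  "Rmil n \<pi> t = {fst \<pi> i | i. i \<in> {1..n} \<and> (\<forall>j\<in>{i<..n}. fst \<pi> i < fst \<pi> j) \<and> snd \<pi> i = t}"

definition Lmil :: "nat \<Rightarrow> cperm \<Rightarrow> nat \<Rightarrow> nat set" where
  "Lmil n \<pi> t = {fst \<pi> i | i. i \<in> {1..n} \<and> (\<forall>j\<in>{1..<i}. fst \<pi> i < fst \<pi> j) \<and> snd \<pi> i = t}"

definition Lmal :: "nat \<Rightarrow> cperm \<Rightarrow> nat \<Rightarrow> nat set" where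
  "Lmal n \<pi> t = {fst \<pi> i | i. i \<in> {1..n} \<and> (\<forall>j\<in>{1..<i}. fst \<pi> i > fst \<pi> j) \<and> snd \<pi> i = t}"

definition Lmap :: "nat \<Rightarrow> cperm \<Rightarrow> nat \<Rightarrow> nat set" where
  "Lmap n \<pi> t = {i | i. i \<in> {1..n} \<and> (\<forall>j\<in>{1..<i}. fst \<pi> i > fst \<pi> j) \<and> snd \<pi> i = t}"

definition cycle_of :: "(nat \<Rightarrow> nat) \<Rightarrow> nat \<Rightarrow> nat set" where
  "cycle_of \<sigma> i = {(\<sigma> ^^ m) i | m. True}"

definition Cyc :: "nat \<Rightarrow> nat \<Rightarrow> cperm \<Rightarrow> nat \<Rightarrow> nat set" where
  "Cyc r n \<pi> t = {Min B | B. B \<in> cycle_of (fst \<pi>) ` {1..n}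
                              \<and> (\<Sum>k\<in>B. snd \<pi> k) mod r = t}"

text \<open>Action on colored letters (i, t) = i^[t]: pi(i^[t]) = sigma_i^[z_i + t].\<close>
definition cact :: "nat \<Rightarrow> cperm \<Rightarrow> nat \<times> nat \<Rightarrow> nat \<times> nat" where
  "cact r \<pi> a = (fst \<pi> (fst a), (snd \<pi> (fst a) + snd a) mod r)"

definition Lmic :: "nat \<Rightarrow> cperm \<Rightarrow> nat \<Rightarrow> nat set" where
  "Lmic r \<pi> t =
    (let m = (LEAST m. m \<ge> 1 \<and> fst (((cact r \<pi>) ^^ m) (1, 0)) = 1);
         w = (\<lambda>k. ((cact r \<pi>) ^^ k) (1, 0))
     in {fst (w k) | k. k \<in> {1..m} \<and> (\<forall>l\<in>{1..<k}. fst (w k) < fst (w l)) \<and> snd (w k) = t})"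

definition colors_up :: "nat \<Rightarrow> nat list" where
  "colors_up r = [0..<r]"

definition colors_down :: "nat \<Rightarrow> nat list" where
  "colors_down r = map (\<lambda>t. (r - t) mod r) [0..<r]"

definition tuple1 :: "nat \<Rightarrow> nat \<Rightarrow> cperm \<Rightarrow> nat \<times> nat set list \<times> nat set list \<times> nat set list \<times> nat set list" where
  "tuple1 r n \<pi> = (clength r n \<pi>, map (Rmil n \<pi>) (colors_up r), map (Lmil n \<pi>) (colors_up r),
                   map (Lmal n \<pi>) (colors_up r), map (Lmap n \<pi>) (colors_up r))"

definition tuple2 :: "nat \<Rightarrow> nat \<Rightarrow> cperm \<Rightarrow> nat \<times> nat set list \<times> nat set list \<times> nat set list \<times> nat set list" where
  "tuple2 r n \<pi> = (sor r n \<pi>, map (Cyc r n \<pi>) (colors_down r), map (Lmic r \<pi>) (colors_down r),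
                   map (Lmal n \<pi>) (colors_down r), map (Lmap n \<pi>) (colors_down r))"

end

theory Submission
  imports Defs "HOL-Combinatorics.Orbits"
begin

text \<open>Both tuples obey the same recursion in n.  Deleting the letter n, at position c with color e,
  from a word of G_{r,n,f} and closing the gap identifies G_{r,n,f} with
  G_{r,n-1,f} \<times> {c. n \<le> f c} \<times> {0..<r}.  The length, computed by an inversion formula, then grows
  by (n - c) + [e > 0] (2 (c - 1) + e); n is a new right-to-left minimum iff c = n and a new
  left-to-right minimum iff c = 1.  Undoing one step of the sorting algorithm instead (swapping n
  back into position c) identifies the same sets in a second way, under which sor grows by the same
  amount, n forms a new cycle iff c = n and is a new record on the cycle of 1 iff c = 1, both with
  color -e.  In both decompositions the left-to-right maxima are those before position c plus the
  letter n at c.  Composing the first decomposition with the inverse of the second, recursively,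
  gives a bijection of G_{r,n,f} carrying the first tuple to the second.\<close>

lemma Grn_perm: "\<pi> \<in> Grn r n \<Longrightarrow> fst \<pi> permutes {1..n}"
  by (cases \<pi>) (simp add: Grn_def)

lemma Grn_color_less: "\<pi> \<in> Grn r n \<Longrightarrow> r \<ge> 1 \<Longrightarrow> snd \<pi> i < r"
  by (cases \<pi>) (auto simp add: Grn_def)

lemma Grnf_subset_Grn: "Grnf r n f \<subseteq> Grn r n"
  by (auto simp: Grnf_def)

lemma cident_in_Grn: "r \<ge> 1 \<Longrightarrow> cident \<in> Grn r n"
  by (simp add: cident_def Grn_def permutes_id)

lemma permutes_shrink_last: "s permutes {1..n::nat} \<Longrightarrow> s n = n \<Longrightarrow> s permutes {1..n - 1}"
proof (rule permutes_superset)
  fix x assume "s permutes {1..n}" "s n = n" "x \<in> {1..n} - {1..n-1}"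
  then show "s x = x" by (cases "x = n") auto
qed

lemma permutes_extend_last: "s permutes {1..n - 1::nat} \<Longrightarrow> s permutes {1..n}"
  by (erule permutes_subset) auto

lemma permutes_fixes_last: "s permutes {1..n - 1::nat} \<Longrightarrow> s n = n"
  by (erule permutes_not_in) auto

lemma permutes_strict_mono_eq_id:
  assumes p: "p permutes {1..n::nat}" and incr: "\<forall>k\<in>{1..<n}. p k < p (Suc k)" and k: "k \<in> {1..n}"
  shows "p k = k"
proof -
  have in_range: "p k \<in> {1..n}" if "k \<in> {1..n}" for k
    using that permutes_in_image[OF p] by blast
  have ge: "k \<le> p k" if "k \<in> {1..n}" for k
    using that
  proof (induction k)
    case (Suc k)
    show ?case
    proof (cases "k = 0")
      case True
      then show ?thesis using Suc.prems in_range[of 1] by simp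
    next
      case False
      then show ?thesis using Suc incr[rule_format, of k] by simp
    qed
  qed simp
  have le: "p (n - d) \<le> n - d" if "d < n" for d
    using that
  proof (induction d)
    case 0
    then show ?case using in_range[of n] by simp
  next
    case (Suc d)
    then have "p (n - Suc d) < p (Suc (n - Suc d))" using incr by simp
    moreover have "Suc (n - Suc d) = n - d" using Suc by simp
    ultimately show ?case using Suc by simp
  qed
  show ?thesis using ge[OF k] le[of "n - k"] k by simp
qed

section \<open>The length function\<close>

definition length_contrib :: "nat set \<Rightarrow> cperm \<Rightarrow> nat \<Rightarrow> nat" where
  "length_contrib S \<pi> p = card {q\<in>S. p < q \<and> fst \<pi> q < fst \<pi> p}
     + (if snd \<pi> p > 0 then 2 * card {q\<in>S. q < p \<and> fst \<pi> q < fst \<pi> p} + snd \<pi> p else 0)"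

definition length_sum :: "nat set \<Rightarrow> cperm \<Rightarrow> nat" where
  "length_sum S \<pi> = (\<Sum>p\<in>S. length_contrib S \<pi> p)"

lemma length_sum_cident: "length_sum S cident = 0"
  unfolding length_sum_def length_contrib_def cident_def
  by (intro sum.neutral) (auto simp: card_eq_0_iff)

lemma length_contrib_cong:
  "fst \<pi> = fst \<pi>' \<Longrightarrow> snd \<pi> p = snd \<pi>' p \<Longrightarrow> length_contrib S \<pi> p = length_contrib S \<pi>' p"
  by (simp add: length_contrib_def)

lemma length_sum_color_update:
  assumes fin: "finite S" and p0: "p0 \<in> S" and s1: "s p0 = 1" and pos: "\<forall>q\<in>S. s q \<ge> 1"
  shows "length_sum S (s, z(p0 := v)) + z p0 = length_sum S (s, z) + v"
proof -
  have at_p0: "length_contrib S (s, w) p0 = w p0" for w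
  proof -
    have right: "{q\<in>S. p0 < q \<and> s q < s p0} = {}" and left: "{q\<in>S. q < p0 \<and> s q < s p0} = {}"
      using pos s1 by auto
    show ?thesis unfolding length_contrib_def fst_conv snd_conv right left by simp
  qed
  have rest: "(\<Sum>p\<in>S-{p0}. length_contrib S (s, z(p0 := v)) p) = (\<Sum>p\<in>S-{p0}. length_contrib S (s, z) p)"
    by (rule sum.cong) (auto intro: length_contrib_cong)
  show ?thesis
    using sum.remove[OF fin p0, of "length_contrib S (s, _)"] at_p0[of z] at_p0[of "z(p0 := v)"] rest
    by (simp add: length_sum_def)
qed

lemma length_contrib_swap_values_other:
  assumes inj: "inj_on s S" and p: "p \<in> S" "s p = i" and q: "q \<in> S" "s q = Suc i"
    and x: "x \<in> S - {p, q}"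
  shows "length_contrib S (transpose i (Suc i) \<circ> s, z) x = length_contrib S (s, z) x"
proof -
  have "s x \<noteq> s p" "s x \<noteq> s q"
    using x inj_onD[OF inj _ _ p(1)] inj_onD[OF inj _ _ q(1)] by auto
  then have "s x \<noteq> i" "s x \<noteq> Suc i" using p q by auto
  then have "(transpose i (Suc i) (s y) < transpose i (Suc i) (s x)) = (s y < s x)" for y
    by (auto simp: transpose_def)
  then show ?thesis by (simp add: length_contrib_def)
qed

lemma card_Collect_or_eq:
  assumes "finite S" "w \<in> S" "\<not> Q w"
  shows "card {y\<in>S. P y \<and> (Q y \<or> y = w)} = card {y\<in>S. P y \<and> Q y} + (if P w then 1 else 0)"
proof -
  have "{y\<in>S. P y \<and> (Q y \<or> y = w)} = {y\<in>S. P y \<and> Q y} \<union> (if P w then {w} else {})"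
    using assms(2) by auto
  then show ?thesis using assms by auto
qed

lemma length_contrib_swap_values_pair:
  assumes fin: "finite S" and inj: "inj_on s S" and p: "p \<in> S" "s p = i" and q: "q \<in> S" "s q = Suc i"
  defines "\<tau> \<equiv> transpose i (Suc i)"
  shows "length_contrib S (\<tau> \<circ> s, z) p + length_contrib S (\<tau> \<circ> s, z) q
           + (if z q > 0 \<and> p < q then 2 else 0) + (if q < p then 1 else 0)
       = length_contrib S (s, z) p + length_contrib S (s, z) q
           + (if p < q then 1 else 0) + (if z p > 0 \<and> q < p then 2 else 0)"
proof -
  define below where "below P = card {y\<in>S. P y \<and> s y < i}" for P
  have is_p: "s y = i \<longleftrightarrow> y = p" and is_q: "s y = Suc i \<longleftrightarrow> y = q" if "y \<in> S" for y
    using that inj p q by (metis inj_on_eq_iff)+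
  have "(\<tau> (s y) < \<tau> (s p)) \<longleftrightarrow> s y < i \<or> y = q" if "y \<in> S" for y
    using p(2) is_q[OF that] by (auto simp: \<tau>_def transpose_def)
  then have "{y\<in>S. P y \<and> \<tau> (s y) < \<tau> (s p)} = {y\<in>S. P y \<and> (s y < i \<or> y = q)}" for P
    by blast
  then have T1: "length_contrib S (\<tau> \<circ> s, z) p = below ((<) p) + (if p < q then 1 else 0)
      + (if z p > 0 then 2 * (below (\<lambda>y. y < p) + (if q < p then 1 else 0)) + z p else 0)"
    unfolding length_contrib_def below_def fst_conv snd_conv o_apply
    using card_Collect_or_eq[OF fin q(1), where Q = "\<lambda>y. s y < i"] q(2) by simp
  have "(s y < s q) \<longleftrightarrow> s y < i \<or> y = p" if "y \<in> S" for y
    using q(2) is_p[OF that] by auto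
  then have "{y\<in>S. P y \<and> s y < s q} = {y\<in>S. P y \<and> (s y < i \<or> y = p)}" for P
    by blast
  then have T3: "length_contrib S (s, z) q = below ((<) q) + (if q < p then 1 else 0)
      + (if z q > 0 then 2 * (below (\<lambda>y. y < q) + (if p < q then 1 else 0)) + z q else 0)"
    unfolding length_contrib_def below_def fst_conv snd_conv
    using card_Collect_or_eq[OF fin p(1), where Q = "\<lambda>y. s y < i"] p(2) by simp
  have "(\<tau> u < \<tau> (s q)) \<longleftrightarrow> u < i" for u
    using q(2) by (auto simp: \<tau>_def transpose_def)
  then have T2: "length_contrib S (\<tau> \<circ> s, z) q = below ((<) q)
      + (if z q > 0 then 2 * below (\<lambda>y. y < q) + z q else 0)"
    unfolding length_contrib_def below_def fst_conv snd_conv o_apply by simp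
  have T4: "length_contrib S (s, z) p = below ((<) p)
      + (if z p > 0 then 2 * below (\<lambda>y. y < p) + z p else 0)"
    unfolding length_contrib_def below_def fst_conv snd_conv p(2) by simp
  have "p \<noteq> q" using p(2) q(2) by auto
  then show ?thesis unfolding T1 T2 T3 T4 by (cases "p < q") auto
qed

lemma length_sum_swap_values:
  assumes fin: "finite S" and inj: "inj_on s S" and p: "p \<in> S" "s p = i" and q: "q \<in> S" "s q = Suc i"
  shows "length_sum S (transpose i (Suc i) \<circ> s, z)
           + (if z q > 0 \<and> p < q then 2 else 0) + (if q < p then 1 else 0)
       = length_sum S (s, z) + (if p < q then 1 else 0) + (if z p > 0 \<and> q < p then 2 else 0)"
proof -
  have pq: "p \<noteq> q" using p(2) q(2) by auto
  have split: "length_sum S \<pi>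
      = length_contrib S \<pi> p + length_contrib S \<pi> q + (\<Sum>x\<in>S-{p,q}. length_contrib S \<pi> x)" for \<pi>
  proof -
    have "length_sum S \<pi> = length_contrib S \<pi> p + (\<Sum>x\<in>S-{p}. length_contrib S \<pi> x)"
      unfolding length_sum_def by (rule sum.remove[OF fin p(1)])
    also have "(\<Sum>x\<in>S-{p}. length_contrib S \<pi> x)
        = length_contrib S \<pi> q + (\<Sum>x\<in>S-{p}-{q}. length_contrib S \<pi> x)"
      by (rule sum.remove) (use fin q pq in auto)
    also have "S-{p}-{q} = S-{p,q}" by blast
    finally show ?thesis by (simp add: add.assoc)
  qed
  have "(\<Sum>x\<in>S-{p,q}. length_contrib S (transpose i (Suc i) \<circ> s, z) x)
      = (\<Sum>x\<in>S-{p,q}. length_contrib S (s, z) x)"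
    using length_contrib_swap_values_other[OF inj p q] by (rule sum.cong[OF refl])
  then show ?thesis
    using length_contrib_swap_values_pair[OF fin inj p q, of z] unfolding split by simp
qed

lemma cmult_geni:
  "\<pi> \<in> Grn r n \<Longrightarrow> r \<ge> 1 \<Longrightarrow> cmult r (geni i) \<pi> = (transpose i (Suc i) \<circ> fst \<pi>, snd \<pi>)"
  using Grn_color_less[of \<pi> r n] by (auto simp: cmult_def geni_def transpose_def fun_eq_iff)

lemma cmult_gen0:
  assumes \<pi>: "\<pi> \<in> Grn r n" and r: "r \<ge> 1"
  shows "cmult r (gen0 r) \<pi> = (fst \<pi>, (snd \<pi>)(inv (fst \<pi>) 1 := (snd \<pi> (inv (fst \<pi>) 1) + 1) mod r))"
proof -
  have p: "fst \<pi> permutes {1..n}" using Grn_perm[OF \<pi>] .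
  have "fst \<pi> x = 1 \<longleftrightarrow> x = inv (fst \<pi>) 1" for x
    using permutes_inv_eq[OF p] by metis
  then show ?thesis
    using Grn_color_less[OF \<pi> r] by (auto simp: cmult_def gen0_def fun_eq_iff mod_add_right_eq)
qed

lemma cmult_gen_in_Grn:
  assumes \<pi>: "\<pi> \<in> Grn r n" and g: "g \<in> gens r n" and r: "r \<ge> 1" and n: "n \<ge> 1"
  shows "cmult r g \<pi> \<in> Grn r n"
proof -
  obtain s z where \<pi>_eq: "\<pi> = (s, z)" by force
  have s: "s permutes {1..n}" and zr: "\<And>i. i \<in> {1..n} \<Longrightarrow> z i < r" and z0: "\<And>i. i \<notin> {1..n} \<Longrightarrow> z i = 0"
    using \<pi> by (auto simp: \<pi>_eq Grn_def)
  from g consider "g = gen0 r" | i where "i \<in> {1..<n}" "g = geni i" by (auto simp: gens_def)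
  then show ?thesis
  proof cases
    case 1
    have "inv s 1 \<in> {1..n}" using permutes_in_image[OF permutes_inv[OF s], of 1] n by simp
    then show ?thesis using 1 cmult_gen0[OF \<pi> r] s zr z0 r by (auto simp: \<pi>_eq Grn_def)
  next
    case 2
    have "transpose i (Suc i) permutes {1..n}" using 2 by (intro permutes_swap_id) auto
    then show ?thesis using 2 cmult_geni[OF \<pi> r] permutes_compose[OF s] zr z0 by (auto simp: \<pi>_eq Grn_def)
  qed
qed

lemma length_sum_cmult_gen_le:
  assumes \<pi>: "\<pi> \<in> Grn r n" and g: "g \<in> gens r n" and r: "r \<ge> 1" and n: "n \<ge> 1"
  shows "length_sum {1..n} (cmult r g \<pi>) \<le> length_sum {1..n} \<pi> + 1"
proof -
  obtain s z where \<pi>_eq: "\<pi> = (s, z)" by force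
  have s: "s permutes {1..n}" using Grn_perm[OF \<pi>] by (simp add: \<pi>_eq)
  have pos: "\<forall>q\<in>{1..n}. s q \<ge> 1" using permutes_in_image[OF s] by fastforce
  from g consider "g = gen0 r" | i where "i \<in> {1..<n}" "g = geni i" by (auto simp: gens_def)
  then show ?thesis
  proof cases
    case 1
    define p0 where "p0 = inv s 1"
    have p0: "p0 \<in> {1..n}" "s p0 = 1"
      unfolding p0_def
        using permutes_in_image[OF permutes_inv[OF s], of 1] permutes_inverses(1)[OF s] n by auto
    have "length_sum {1..n} (s, z(p0 := (z p0 + 1) mod r)) + z p0
        = length_sum {1..n} (s, z) + (z p0 + 1) mod r"
      by (rule length_sum_color_update[OF _ p0 pos]) simp
    moreover have "(z p0 + 1) mod r \<le> z p0 + 1" by (rule mod_less_eq_dividend)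
    ultimately have "length_sum {1..n} (s, z(p0 := (z p0 + 1) mod r)) \<le> length_sum {1..n} (s, z) + 1"
      by linarith
    then show ?thesis using 1 cmult_gen0[OF \<pi> r] by (simp add: \<pi>_eq p0_def)
  next
    case 2
    define p where "p = inv s i"
    define q where "q = inv s (Suc i)"
    have p: "p \<in> {1..n}" "s p = i" and q: "q \<in> {1..n}" "s q = Suc i"
      using 2 permutes_in_image[OF permutes_inv[OF s]] permutes_inverses(1)[OF s]
        unfolding p_def q_def by auto
    show ?thesis
      using length_sum_swap_values[OF _ permutes_inj_on[OF s] p q, of z] 2 cmult_geni[OF \<pi> r]
      by (auto simp: \<pi>_eq split: if_splits)
  qed
qed

lemma foldr_gens_in_Grn_length_sum_le:
  assumes "set ws \<subseteq> gens r n" "r \<ge> 1" "n \<ge> 1"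
  shows "foldr (cmult r) ws cident \<in> Grn r n \<and> length_sum {1..n} (foldr (cmult r) ws cident) \<le> length ws"
  using assms(1)
proof (induction ws)
  case Nil
  then show ?case using cident_in_Grn[OF assms(2)] by (simp add: length_sum_cident)
next
  case (Cons g ws)
  then have g: "g \<in> gens r n" and IH: "foldr (cmult r) ws cident \<in> Grn r n"
    "length_sum {1..n} (foldr (cmult r) ws cident) \<le> length ws" by auto
  then show ?case
    using cmult_gen_in_Grn[OF IH(1) g assms(2,3)] length_sum_cmult_gen_le[OF IH(1) g assms(2,3)] by simp
qed

definition left_descent :: "(nat \<Rightarrow> nat) \<Rightarrow> (nat \<Rightarrow> nat) \<Rightarrow> nat \<Rightarrow> bool" where
  "left_descent s z i \<longleftrightarrow> (inv s i < inv s (Suc i) \<and> z (inv s (Suc i)) > 0)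
                        \<or> (inv s (Suc i) < inv s i \<and> z (inv s i) = 0)"

lemma eq_cident_if_no_left_descent:
  assumes s: "s permutes {1..n}" and z0: "\<forall>i. i \<notin> {1..n} \<longrightarrow> z i = 0" and z1: "z (inv s 1) = 0"
    and no_descent: "\<forall>i\<in>{1..<n}. \<not> left_descent s z i"
  shows "(s, z) = cident"
proof -
  have pos: "inv s permutes {1..n}" using permutes_inv[OF s] .
  have distinct: "inv s k \<noteq> inv s (Suc k)" for k
    using permutes_inverses(1)[OF s] by (metis n_not_Suc_n)
  have zero: "z (inv s k) = 0" if "k \<in> {1..n}" for k
    using that
  proof (induction k)
    case (Suc k)
    show ?case
    proof (cases "k = 0")
      case True
      then show ?thesis using z1 by simp
    next
      case False
      then have "z (inv s k) = 0" "\<not> left_descent s z k" using Suc no_descent by auto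
      then show ?thesis using distinct[of k] by (auto simp: left_descent_def linorder_neq_iff)
    qed
  qed simp
  have incr: "\<forall>k\<in>{1..<n}. inv s k < inv s (Suc k)"
    using no_descent zero distinct by (fastforce simp: left_descent_def)
  have "s k = k" for k
  proof (cases "k \<in> {1..n}")
    case True
    then show ?thesis using permutes_strict_mono_eq_id[OF pos incr True] permutes_inv_eq[OF s] by metis
  next
    case False
    then show ?thesis using permutes_not_in[OF s] by simp
  qed
  moreover have "z k = 0" for k
    using zero[of k] z0 calculation permutes_inv_eq[OF s] by metis
  ultimately show ?thesis by (simp add: cident_def fun_eq_iff)
qed

lemma gen0_lowers_length_sum:
  assumes \<pi>: "(s, z) \<in> Grn r n" and r: "r \<ge> 1" and n: "n \<ge> 1" and z1: "z (inv s 1) > 0"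
  shows "\<exists>\<pi>'\<in>Grn r n. cmult r (gen0 r) \<pi>' = (s, z) \<and> length_sum {1..n} \<pi>' + 1 = length_sum {1..n} (s, z)"
proof -
  have s: "s permutes {1..n}" and zr: "\<And>i. z i < r" and z0: "\<And>i. i \<notin> {1..n} \<Longrightarrow> z i = 0"
    using \<pi> Grn_color_less[OF \<pi> r] by (auto simp: Grn_def)
  define p0 where "p0 = inv s 1"
  have p0: "p0 \<in> {1..n}" "s p0 = 1"
    unfolding p0_def
      using permutes_in_image[OF permutes_inv[OF s], of 1] permutes_inverses(1)[OF s] n by auto
  let ?\<pi>' = "(s, z(p0 := z p0 - 1))"
  have pos: "\<forall>q\<in>{1..n}. s q \<ge> 1" using permutes_in_image[OF s] by fastforce
  have "length_sum {1..n} ?\<pi>' + z p0 = length_sum {1..n} (s, z) + (z p0 - 1)"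
    by (rule length_sum_color_update[OF _ p0 pos]) simp
  then have "length_sum {1..n} ?\<pi>' + 1 = length_sum {1..n} (s, z)" using z1 p0_def by simp
  moreover have in_Grn: "?\<pi>' \<in> Grn r n" using s zr z0 p0 by (auto simp: Grn_def less_imp_diff_less)
  moreover have "cmult r (gen0 r) ?\<pi>' = (s, z)"
    using cmult_gen0[OF in_Grn r] z1 zr[of p0] by (simp add: p0_def fun_eq_iff)
  ultimately show ?thesis by blast
qed

lemma geni_lowers_length_sum:
  assumes \<pi>: "(s, z) \<in> Grn r n" and r: "r \<ge> 1" and i: "i \<in> {1..<n}" and descent: "left_descent s z i"
  shows "\<exists>\<pi>'\<in>Grn r n. cmult r (geni i) \<pi>' = (s, z) \<and> length_sum {1..n} \<pi>' + 1 = length_sum {1..n} (s, z)"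
proof -
  have s: "s permutes {1..n}" using Grn_perm[OF \<pi>] by simp
  define p where "p = inv s i"
  define q where "q = inv s (Suc i)"
  have p: "p \<in> {1..n}" "s p = i" and q: "q \<in> {1..n}" "s q = Suc i"
    using i permutes_in_image[OF permutes_inv[OF s]] permutes_inverses(1)[OF s]
      unfolding p_def q_def by auto
  let ?\<pi>' = "(transpose i (Suc i) \<circ> s, z)"
  have "length_sum {1..n} ?\<pi>' + 1 = length_sum {1..n} (s, z)"
    using length_sum_swap_values[OF _ permutes_inj_on[OF s] p q, of z] descent
    unfolding left_descent_def p_def[symmetric] q_def[symmetric] by (auto split: if_splits)
  moreover have in_Grn: "?\<pi>' \<in> Grn r n"
  proof -
    have "transpose i (Suc i) permutes {1..n}" using i by (intro permutes_swap_id) auto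
    then show ?thesis using \<pi> permutes_compose[OF s] by (auto simp: Grn_def)
  qed
  moreover have "cmult r (geni i) ?\<pi>' = (s, z)" using cmult_geni[OF in_Grn r] by (simp add: fun_eq_iff)
  ultimately show ?thesis by blast
qed

lemma exists_gen_lowering_length_sum:
  assumes \<pi>: "\<pi> \<in> Grn r n" and ne: "\<pi> \<noteq> cident" and r: "r \<ge> 1" and n: "n \<ge> 1"
  shows "\<exists>g\<in>gens r n. \<exists>\<pi>'\<in>Grn r n. cmult r g \<pi>' = \<pi> \<and> length_sum {1..n} \<pi>' + 1 = length_sum {1..n} \<pi>"
proof -
  obtain s z where \<pi>_eq: "\<pi> = (s, z)" by force
  have s: "s permutes {1..n}" and z0: "\<forall>i. i \<notin> {1..n} \<longrightarrow> z i = 0" using \<pi> by (auto simp: \<pi>_eq Grn_def)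
  show ?thesis
  proof (cases "z (inv s 1) > 0")
    case True
    then show ?thesis using gen0_lowers_length_sum[OF \<pi>[unfolded \<pi>_eq] r n] by (auto simp: \<pi>_eq gens_def)
  next
    case False
    then have "\<not> (\<forall>i\<in>{1..<n}. \<not> left_descent s z i)"
      using eq_cident_if_no_left_descent[OF s z0] ne \<pi>_eq by auto
    then obtain i where i: "i \<in> {1..<n}" "left_descent s z i" by blast
    then have "geni i \<in> gens r n" by (simp add: gens_def)
    then show ?thesis using geni_lowers_length_sum[OF \<pi>[unfolded \<pi>_eq] r i] by (auto simp: \<pi>_eq)
  qed
qed

lemma exists_gens_word_of_length_sum:
  assumes "\<pi> \<in> Grn r n" "r \<ge> 1" "n \<ge> 1"
  shows "\<exists>ws. length ws = length_sum {1..n} \<pi> \<and> set ws \<subseteq> gens r n \<and> foldr (cmult r) ws cident = \<pi>"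
  using assms(1)
proof (induction "length_sum {1..n} \<pi>" arbitrary: \<pi> rule: less_induct)
  case less
  show ?case
  proof (cases "\<pi> = cident")
    case True
    then show ?thesis by (intro exI[of _ "[]"]) (simp add: length_sum_cident)
  next
    case False
    then obtain g \<pi>' where g: "g \<in> gens r n" "\<pi>' \<in> Grn r n" "cmult r g \<pi>' = \<pi>"
      "length_sum {1..n} \<pi>' + 1 = length_sum {1..n} \<pi>"
      using exists_gen_lowering_length_sum[OF less.prems _ assms(2,3)] by blast
    then obtain ws
      where "length ws = length_sum {1..n} \<pi>'" "set ws \<subseteq> gens r n" "foldr (cmult r) ws cident = \<pi>'"
      using less.hyps[of \<pi>'] by auto
    then show ?thesis using g by (intro exI[of _ "g # ws"]) auto
  qed
qed

theorem clength_eq_length_sum: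
  assumes "\<pi> \<in> Grn r n" "r \<ge> 1" "n \<ge> 1"
  shows "clength r n \<pi> = length_sum {1..n} \<pi>"
  unfolding clength_def
proof (rule Least_equality)
  show "\<exists>ws. length ws = length_sum {1..n} \<pi> \<and> set ws \<subseteq> gens r n \<and> foldr (cmult r) ws cident = \<pi>"
    using exists_gens_word_of_length_sum assms by blast
next
  fix k assume "\<exists>ws. length ws = k \<and> set ws \<subseteq> gens r n \<and> foldr (cmult r) ws cident = \<pi>"
  then show "length_sum {1..n} \<pi> \<le> k" using foldr_gens_in_Grn_length_sum_le assms(2,3) by blast
qed

section \<open>Two ways of removing the letter n\<close>

lemma neg_mod_neg_mod: "(a::nat) < r \<Longrightarrow> (r - (r - a) mod r) mod r = a"
  by (cases "a = 0") auto

lemma neg_mod_inj: "(e::nat) < r \<Longrightarrow> t < r \<Longrightarrow> (r - e) mod r = (r - t) mod r \<longleftrightarrow> e = t"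
  by (metis neg_mod_neg_mod)

lemma sub_add_mod_cancel: "(e::nat) \<le> r \<Longrightarrow> ((x + r - e) mod r + e) mod r = x mod r"
proof -
  assume e: "e \<le> r"
  have "((x + r - e) mod r + e) mod r = (x + r - e + e) mod r" by (simp add: mod_add_left_eq)
  also have "x + r - e + e = x + r" using e by simp
  finally show ?thesis by simp
qed

lemma add_sub_mod_cancel: "(e::nat) \<le> r \<Longrightarrow> ((x + e) mod r + r - e) mod r = x mod r"
proof -
  assume e: "e \<le> r"
  have "((x + e) mod r + r - e) mod r = ((x + e) mod r + (r - e)) mod r" using e by simp
  also have "\<dots> = (x + e + (r - e)) mod r" by (simp add: mod_add_left_eq)
  also have "x + e + (r - e) = x + r" using e by simp
  finally show ?thesis by simp
qed

lemma add_neg_mod_cancel: "e \<le> (r::nat) \<Longrightarrow> ((a + e) mod r + (r - e) mod r + x) mod r = (a + x) mod r"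
proof -
  assume e: "e \<le> r"
  have "((a + e) mod r + (r - e) mod r + x) mod r = (a + e + (r - e) + x) mod r"
    by (metis mod_add_eq mod_add_left_eq)
  also have "a + e + (r - e) + x = (a + x) + r" using e by simp
  finally show ?thesis by simp
qed

text \<open>What remains after removing n: a word of G_{r,n-1,f}, the position c of n (so n \<le> f c) and a
  color e.\<close>

definition insertion_data :: "nat \<Rightarrow> nat \<Rightarrow> (nat \<Rightarrow> nat) \<Rightarrow> (cperm \<times> nat \<times> nat) set" where
  "insertion_data r n f = Grnf r (n - 1) f \<times> ({c\<in>{1..n}. n \<le> f c} \<times> {..<r})"

definition move_to_end :: "nat \<Rightarrow> nat \<Rightarrow> nat \<Rightarrow> nat" where
  "move_to_end n c p = (if p < c then p else if p = c then n else if p \<le> n then p - 1 else p)"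

definition move_from_end :: "nat \<Rightarrow> nat \<Rightarrow> nat \<Rightarrow> nat" where
  "move_from_end n c p = (if p < c then p else if p < n then p + 1 else if p = n then c else p)"

lemma move_to_end_from_end: "c \<in> {1..n} \<Longrightarrow> move_to_end n c (move_from_end n c p) = p"
  by (auto simp: move_to_end_def move_from_end_def)

lemma move_from_end_to_end: "c \<in> {1..n} \<Longrightarrow> move_from_end n c (move_to_end n c p) = p"
  by (auto simp: move_to_end_def move_from_end_def)

lemma permutes_by_inverse:
  assumes "\<And>x. f (g x) = x" "\<And>x. g (f x) = x" "\<And>x. x \<notin> S \<Longrightarrow> f x = x"
  shows "f permutes S"
  unfolding permutes_def using assms by metis

lemma move_to_end_permutes: "c \<in> {1..n} \<Longrightarrow> move_to_end n c permutes {1..n}"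
  by (rule permutes_by_inverse[of _ "move_from_end n c"])
    (auto simp: move_to_end_from_end move_from_end_to_end, auto simp: move_to_end_def)

lemma move_from_end_permutes: "c \<in> {1..n} \<Longrightarrow> move_from_end n c permutes {1..n}"
  by (rule permutes_by_inverse[of _ "move_to_end n c"])
    (auto simp: move_to_end_from_end move_from_end_to_end, auto simp: move_from_end_def)

definition insert_shift :: "nat \<Rightarrow> cperm \<Rightarrow> nat \<Rightarrow> nat \<Rightarrow> cperm" where
  "insert_shift n \<pi> c e = (fst \<pi> \<circ> move_to_end n c, (snd \<pi> \<circ> move_to_end n c)(c := e))"

definition remove_shift :: "nat \<Rightarrow> cperm \<Rightarrow> cperm \<times> nat \<times> nat" where
  "remove_shift n \<pi> = (let c = inv (fst \<pi>) n in
     ((fst \<pi> \<circ> move_from_end n c, (snd \<pi>)(c := 0) \<circ> move_from_end n c), c, snd \<pi> c))"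

text \<open>remove_swap is one step of the sorting algorithm defining sor: the letter n, at position c with
  color -e, is replaced by the last letter, whose color decreases by e.  insert_swap is its inverse.\<close>

definition insert_swap :: "nat \<Rightarrow> nat \<Rightarrow> cperm \<Rightarrow> nat \<Rightarrow> nat \<Rightarrow> cperm" where
  "insert_swap r n \<pi> c e = (fst \<pi> \<circ> transpose c n,
     if c = n then (snd \<pi>)(n := (r - e) mod r)
     else (snd \<pi>)(c := (r - e) mod r, n := (snd \<pi> c + e) mod r))"

definition remove_swap :: "nat \<Rightarrow> nat \<Rightarrow> cperm \<Rightarrow> cperm \<times> nat \<times> nat" where
  "remove_swap r n \<pi> = (let c = inv (fst \<pi>) n; e = (r - snd \<pi> c) mod r in
     ((fst \<pi> \<circ> transpose c n,
       if c = n then (snd \<pi>)(n := 0) else (snd \<pi>)(c := (snd \<pi> n + r - e) mod r, n := 0)), c, e))"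

lemma insert_shift_in_Grnf:
  assumes r: "r \<ge> 1" and mono: "\<forall>i\<in>{1..n}. \<forall>j\<in>{1..n}. i \<le> j \<longrightarrow> f i \<le> f j"
    and x: "(\<pi>, c, e) \<in> insertion_data r n f"
  shows "insert_shift n \<pi> c e \<in> Grnf r n f"
proof -
  obtain s z where \<pi>_eq: "\<pi> = (s, z)" by force
  have s: "s permutes {1..n-1}" and zr: "\<And>i. z i < r"
    and z0: "\<And>i. i \<notin> {1..n-1} \<Longrightarrow> z i = 0" and sf: "\<And>i. i \<in> {1..n-1} \<Longrightarrow> s i \<le> f i"
    and c: "c \<in> {1..n}" "n \<le> f c" and e: "e < r"
    using x Grn_color_less[of \<pi> r "n - 1"] r
    by (auto simp: insertion_data_def Grnf_def Grn_def \<pi>_eq)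
  have bounded: "(s \<circ> move_to_end n c) i \<le> f i" if i: "i \<in> {1..n}" for i
  proof -
    consider "i < c" | "i = c" | "c < i" by linarith
    then show ?thesis
    proof cases
      case 3
      then have "i - 1 \<in> {1..n-1}" using i c by auto
      then have "s (i - 1) \<le> f (i - 1)" "f (i - 1) \<le> f i" using sf mono i by auto
      then show ?thesis using 3 i by (simp add: move_to_end_def)
    qed (use i c sf permutes_fixes_last[OF s] in \<open>auto simp: move_to_end_def\<close>)
  qed
  have "s \<circ> move_to_end n c permutes {1..n}"
    using permutes_compose[OF move_to_end_permutes[OF c(1)] permutes_extend_last[OF s]] .
  moreover have "((z \<circ> move_to_end n c)(c := e)) i < r" if "i \<in> {1..n}" for i
    using zr e by simp
  moreover have "((z \<circ> move_to_end n c)(c := e)) i = 0" if "i \<notin> {1..n}" for i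
    using that c z0 by (auto simp: move_to_end_def)
  ultimately show ?thesis using bounded by (auto simp: insert_shift_def \<pi>_eq Grnf_def Grn_def)
qed

lemma remove_shift_in_insertion_data:
  assumes r: "r \<ge> 1" and n: "n \<ge> 1" and mono: "\<forall>i\<in>{1..n}. \<forall>j\<in>{1..n}. i \<le> j \<longrightarrow> f i \<le> f j"
    and \<pi>: "\<pi> \<in> Grnf r n f"
  shows "remove_shift n \<pi> \<in> insertion_data r n f"
proof -
  obtain s z where \<pi>_eq: "\<pi> = (s, z)" by force
  have s: "s permutes {1..n}" and zr: "\<And>i. z i < r"
    and z0: "\<And>i. i \<notin> {1..n} \<Longrightarrow> z i = 0" and sf: "\<And>i. i \<in> {1..n} \<Longrightarrow> s i \<le> f i"
    using \<pi> Grn_color_less[of \<pi> r n] r by (auto simp: Grnf_def Grn_def \<pi>_eq)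
  define c where "c = inv s n"
  have c: "c \<in> {1..n}" "s c = n"
    using permutes_in_image[OF permutes_inv[OF s], of n] permutes_inverses(1)[OF s] n c_def by auto
  have fc: "n \<le> f c" using sf[OF c(1)] c by simp
  have P: "s \<circ> move_from_end n c permutes {1..n}"
    using permutes_compose[OF move_from_end_permutes[OF c(1)] s] .
  have bounded: "(s \<circ> move_from_end n c) i \<le> f i" if i: "i \<in> {1..n-1}" for i
  proof (cases "i < c")
    case True
    then show ?thesis using i sf[of i] by (auto simp: move_from_end_def)
  next
    case False
    have "(s \<circ> move_from_end n c) i \<in> {1..n}" using permutes_in_image[OF P, of i] i by auto
    moreover have "f c \<le> f i" using mono False i c by auto
    ultimately show ?thesis using fc by auto
  qed
  have "s \<circ> move_from_end n c permutes {1..n-1}"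
    by (rule permutes_shrink_last[OF P]) (use c in \<open>simp add: move_from_end_def\<close>)
  moreover have "(z(c := 0) \<circ> move_from_end n c) i < r" for i
    using zr r by simp
  moreover have "(z(c := 0) \<circ> move_from_end n c) i = 0" if "i \<notin> {1..n-1}" for i
    using that c z0 by (auto simp: move_from_end_def)
  moreover have "z c < r" using zr by simp
  ultimately show ?thesis using bounded c fc
    by (auto simp: remove_shift_def \<pi>_eq insertion_data_def Grnf_def Grn_def c_def Let_def)
qed

lemma remove_insert_shift:
  assumes x: "(\<pi>, c, e) \<in> insertion_data r n f"
  shows "remove_shift n (insert_shift n \<pi> c e) = (\<pi>, c, e)"
proof -
  obtain s z where \<pi>_eq: "\<pi> = (s, z)" by force
  have s: "s permutes {1..n-1}" and z0: "\<And>i. i \<notin> {1..n-1} \<Longrightarrow> z i = 0" and c: "c \<in> {1..n}"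
    using x by (auto simp: insertion_data_def Grnf_def Grn_def \<pi>_eq)
  have P: "s \<circ> move_to_end n c permutes {1..n}"
    using permutes_compose[OF move_to_end_permutes[OF c] permutes_extend_last[OF s]] .
  have "(s \<circ> move_to_end n c) c = n" using permutes_fixes_last[OF s] by (simp add: move_to_end_def)
  then have pos_n: "inv (s \<circ> move_to_end n c) n = c" using permutes_inv_eq[OF P] by blast
  have "s \<circ> move_to_end n c \<circ> move_from_end n c = s"
    using move_to_end_from_end[OF c] by (simp add: fun_eq_iff)
  moreover have "((z \<circ> move_to_end n c)(c := e))(c := 0) \<circ> move_from_end n c = z"
    using move_to_end_from_end[OF c] z0[of n] c by (auto simp: move_from_end_def fun_eq_iff)
  ultimately show ?thesis by (simp add: remove_shift_def insert_shift_def \<pi>_eq pos_n Let_def)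
qed

lemma insert_remove_shift: "(case remove_shift n \<pi> of (\<pi>', c, e) \<Rightarrow> insert_shift n \<pi>' c e) = \<pi>"
  if "\<pi> \<in> Grnf r n f" "n \<ge> 1"
proof -
  obtain s z where \<pi>_eq: "\<pi> = (s, z)" by force
  have s: "s permutes {1..n}" using that by (auto simp: Grnf_def Grn_def \<pi>_eq)
  define c where "c = inv s n"
  have c: "c \<in> {1..n}" using permutes_in_image[OF permutes_inv[OF s], of n] that c_def by auto
  have "s \<circ> move_from_end n c \<circ> move_to_end n c = s"
    using move_from_end_to_end[OF c] by (simp add: fun_eq_iff)
  moreover have "(z(c := 0) \<circ> move_from_end n c \<circ> move_to_end n c)(c := z c) = z"
    using move_from_end_to_end[OF c] by (simp add: fun_eq_iff)
  ultimately show ?thesis by (simp add: remove_shift_def insert_shift_def \<pi>_eq c_def[symmetric] Let_def)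
qed

lemma bij_betw_remove_shift:
  assumes "r \<ge> 1" "n \<ge> 1" "\<forall>i\<in>{1..n}. \<forall>j\<in>{1..n}. i \<le> j \<longrightarrow> f i \<le> f j"
  shows "bij_betw (remove_shift n) (Grnf r n f) (insertion_data r n f)"
proof (rule bij_betwI[where g = "\<lambda>(\<pi>, c, e). insert_shift n \<pi> c e"])
  show "remove_shift n \<in> Grnf r n f \<rightarrow> insertion_data r n f"
    using remove_shift_in_insertion_data[OF assms] by auto
  show "(\<lambda>(\<pi>, c, e). insert_shift n \<pi> c e) \<in> insertion_data r n f \<rightarrow> Grnf r n f"
    using insert_shift_in_Grnf[OF assms(1,3)] by auto
  show "(case remove_shift n \<pi> of (\<pi>', c, e) \<Rightarrow> insert_shift n \<pi>' c e) = \<pi>" if "\<pi> \<in> Grnf r n f" for \<pi>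
    using insert_remove_shift[OF that assms(2)] .
  show "remove_shift n (case x of (\<pi>, c, e) \<Rightarrow> insert_shift n \<pi> c e) = x" if "x \<in> insertion_data r n f" for x
    using remove_insert_shift that by (cases x) auto
qed

lemma insert_swap_in_Grnf:
  assumes r: "r \<ge> 1" and mono: "\<forall>i\<in>{1..n}. \<forall>j\<in>{1..n}. i \<le> j \<longrightarrow> f i \<le> f j"
    and x: "(\<pi>, c, e) \<in> insertion_data r n f"
  shows "insert_swap r n \<pi> c e \<in> Grnf r n f"
proof -
  obtain s z where \<pi>_eq: "\<pi> = (s, z)" by force
  have s: "s permutes {1..n-1}" and zr: "\<And>i. z i < r" and z0: "\<And>i. i \<notin> {1..n-1} \<Longrightarrow> z i = 0"
    and sf: "\<And>i. i \<in> {1..n-1} \<Longrightarrow> s i \<le> f i" and c: "c \<in> {1..n}" "n \<le> f c"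
    using x Grn_color_less[of \<pi> r "n-1"] r by (auto simp: insertion_data_def Grnf_def Grn_def \<pi>_eq)
  have bounded: "(s \<circ> transpose c n) i \<le> f i" if i: "i \<in> {1..n}" for i
  proof -
    consider "i = c" | "i \<noteq> c" "i = n" | "i \<noteq> c" "i \<noteq> n" by blast
    then show ?thesis
    proof cases
      case 2
      then have "c \<in> {1..n-1}" using c by auto
      then have "s c \<le> f c" "f c \<le> f n" using sf mono c by auto
      then show ?thesis using 2 by simp
    qed (use i c sf permutes_fixes_last[OF s] in auto)
  qed
  have "transpose c n permutes {1..n}" using c by (intro permutes_swap_id) auto
  then have "s \<circ> transpose c n permutes {1..n}" using permutes_compose permutes_extend_last[OF s] by blast
  then show ?thesis using bounded c z0 zr r by (auto simp: insert_swap_def \<pi>_eq Grnf_def Grn_def)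
qed

lemma remove_swap_in_insertion_data:
  assumes r: "r \<ge> 1" and n: "n \<ge> 1" and mono: "\<forall>i\<in>{1..n}. \<forall>j\<in>{1..n}. i \<le> j \<longrightarrow> f i \<le> f j"
    and \<pi>: "\<pi> \<in> Grnf r n f"
  shows "remove_swap r n \<pi> \<in> insertion_data r n f"
proof -
  obtain s z where \<pi>_eq: "\<pi> = (s, z)" by force
  have s: "s permutes {1..n}" and zr: "\<And>i. z i < r" and z0: "\<And>i. i \<notin> {1..n} \<Longrightarrow> z i = 0"
    and sf: "\<And>i. i \<in> {1..n} \<Longrightarrow> s i \<le> f i"
    using \<pi> Grn_color_less[of \<pi> r n] r by (auto simp: Grnf_def Grn_def \<pi>_eq)
  define c where "c = inv s n"
  have c: "c \<in> {1..n}" "s c = n"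
    using permutes_in_image[OF permutes_inv[OF s], of n] permutes_inverses(1)[OF s] n c_def by auto
  have fc: "n \<le> f c" using sf[OF c(1)] c by simp
  have "transpose c n permutes {1..n}" using c n by (intro permutes_swap_id) auto
  then have P: "s \<circ> transpose c n permutes {1..n}" using permutes_compose[OF _ s] by blast
  have bounded: "(s \<circ> transpose c n) i \<le> f i" if i: "i \<in> {1..n-1}" for i
  proof (cases "i = c")
    case False
    then show ?thesis using i sf[of i] by auto
  next
    case True
    have "s n \<in> {1..n}" using permutes_in_image[OF s, of n] n by auto
    then show ?thesis using True fc by auto
  qed
  have "s \<circ> transpose c n permutes {1..n-1}" by (rule permutes_shrink_last[OF P]) (use c in simp)
  then show ?thesis using bounded c fc zr z0 r
    by (auto simp: remove_swap_def \<pi>_eq c_def[symmetric] Let_def insertion_data_def Grnf_def Grn_def)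
qed

lemma remove_insert_swap:
  assumes r: "r \<ge> 1" and x: "(\<pi>, c, e) \<in> insertion_data r n f"
  shows "remove_swap r n (insert_swap r n \<pi> c e) = (\<pi>, c, e)"
proof -
  obtain s z where \<pi>_eq: "\<pi> = (s, z)" by force
  have s: "s permutes {1..n-1}" and z0: "\<And>i. i \<notin> {1..n-1} \<Longrightarrow> z i = 0" and c: "c \<in> {1..n}"
    and e: "e < r" and zr: "\<And>i. z i < r"
    using x Grn_color_less[of \<pi> r "n-1"] r by (auto simp: insertion_data_def Grnf_def Grn_def \<pi>_eq)
  have "transpose c n permutes {1..n}" using c by (intro permutes_swap_id) auto
  then have P: "s \<circ> transpose c n permutes {1..n}"
    using permutes_compose permutes_extend_last[OF s] by blast
  have "(s \<circ> transpose c n) c = n" using permutes_fixes_last[OF s] by simp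
  then have pos_n: "inv (s \<circ> transpose c n) n = c" using permutes_inv_eq[OF P] by blast
  have color_c: "(r - snd (insert_swap r n \<pi> c e) c) mod r = e"
    using neg_mod_neg_mod[OF e] by (simp add: insert_swap_def \<pi>_eq)
  have "((z c + e) mod r + r - e) mod r = z c" using add_sub_mod_cancel[of e r "z c"] e zr[of c] by simp
  moreover have "z n = 0" by (rule z0) auto
  ultimately show ?thesis using color_c
    by (auto simp: remove_swap_def insert_swap_def \<pi>_eq pos_n Let_def fun_eq_iff)
qed

lemma insert_remove_swap: "(case remove_swap r n \<pi> of (\<pi>', c, e) \<Rightarrow> insert_swap r n \<pi>' c e) = \<pi>"
  if \<pi>: "\<pi> \<in> Grnf r n f" and r: "r \<ge> 1"
proof -
  obtain s z where \<pi>_eq: "\<pi> = (s, z)" by force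
  have zr: "\<And>i. z i < r" using Grn_color_less[of \<pi> r n] \<pi> r by (auto simp: Grnf_def \<pi>_eq)
  define c where "c = inv s n"
  define e where "e = (r - z c) mod r"
  have "(r - e) mod r = z c" unfolding e_def using neg_mod_neg_mod[OF zr[of c]] .
  moreover have "((z n + r - e) mod r + e) mod r = z n"
    using sub_add_mod_cancel[of e r "z n"] zr[of n] e_def by simp
  ultimately show ?thesis
    by (auto simp: remove_swap_def insert_swap_def \<pi>_eq c_def[symmetric] e_def[symmetric] Let_def fun_eq_iff)
qed

lemma bij_betw_insert_swap:
  assumes "r \<ge> 1" "n \<ge> 1" "\<forall>i\<in>{1..n}. \<forall>j\<in>{1..n}. i \<le> j \<longrightarrow> f i \<le> f j"
  shows "bij_betw (\<lambda>(\<pi>, c, e). insert_swap r n \<pi> c e) (insertion_data r n f) (Grnf r n f)"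
proof (rule bij_betwI[where g = "remove_swap r n"])
  show "(\<lambda>(\<pi>, c, e). insert_swap r n \<pi> c e) \<in> insertion_data r n f \<rightarrow> Grnf r n f"
    using insert_swap_in_Grnf[OF assms(1,3)] by auto
  show "remove_swap r n \<in> Grnf r n f \<rightarrow> insertion_data r n f"
    using remove_swap_in_insertion_data[OF assms] by auto
  show "remove_swap r n (case x of (\<pi>, c, e) \<Rightarrow> insert_swap r n \<pi> c e) = x" if "x \<in> insertion_data r n f" for x
    using remove_insert_swap[OF assms(1)] that by (cases x) auto
  show "(case remove_swap r n y of (\<pi>, c, e) \<Rightarrow> insert_swap r n \<pi> c e) = y" if "y \<in> Grnf r n f" for y
    using insert_remove_swap[OF that assms(1)] .
qed

section \<open>Shift insertion: length, Rmil, Lmil and left-to-right maxima\<close>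

lemma move_to_end_image: "c \<in> {1..n} \<Longrightarrow> move_to_end n c ` ({1..n} - {c}) = {1..n-1}"
proof
  assume c: "c \<in> {1..n}"
  show "move_to_end n c ` ({1..n} - {c}) \<subseteq> {1..n-1}" using c by (auto simp: move_to_end_def)
  show "{1..n-1} \<subseteq> move_to_end n c ` ({1..n} - {c})"
  proof
    fix y assume "y \<in> {1..n-1}"
    then have "move_from_end n c y \<in> {1..n} - {c}" using c by (auto simp: move_from_end_def)
    then show "y \<in> move_to_end n c ` ({1..n} - {c})" using move_to_end_from_end[OF c] by (metis image_eqI)
  qed
qed

lemma bij_betw_move_to_end: "c \<in> {1..n} \<Longrightarrow> bij_betw (move_to_end n c) ({1..n} - {c}) {1..n-1}"
  unfolding bij_betw_def using move_to_end_image by (metis inj_on_inverseI move_from_end_to_end)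

lemma move_to_end_less_iff:
  "c \<in> {1..n} \<Longrightarrow> x \<in> {1..n} - {c} \<Longrightarrow> y \<in> {1..n} - {c} \<Longrightarrow> move_to_end n c x < move_to_end n c y \<longleftrightarrow> x < y"
  by (auto simp: move_to_end_def)

lemma insert_shift_at:
  assumes "\<pi> \<in> Grn r (n-1)"
  shows "fst (insert_shift n \<pi> c e) c = n" "snd (insert_shift n \<pi> c e) c = e"
  using permutes_fixes_last[OF Grn_perm[OF assms]] by (simp_all add: insert_shift_def move_to_end_def)

lemma insert_shift_off:
  "x \<noteq> c \<Longrightarrow> fst (insert_shift n \<pi> c e) x = fst \<pi> (move_to_end n c x)"
  "x \<noteq> c \<Longrightarrow> snd (insert_shift n \<pi> c e) x = snd \<pi> (move_to_end n c x)"
  by (simp_all add: insert_shift_def)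

lemma insert_shift_less:
  assumes "\<pi> \<in> Grn r (n-1)" "c \<in> {1..n}" "x \<in> {1..n} - {c}"
  shows "fst (insert_shift n \<pi> c e) x < n"
  using permutes_in_image[OF Grn_perm[OF assms(1)], of "move_to_end n c x"] move_to_end_image[OF assms(2)] assms(3)
  by (fastforce simp: insert_shift_off)

lemma length_contrib_reindex:
  assumes bij: "bij_betw h A B" and mono: "\<forall>x\<in>A. \<forall>y\<in>A. (x < y) = (h x < h y)"
    and eq: "\<forall>x\<in>A. fst \<pi> x = fst \<pi>' (h x) \<and> snd \<pi> x = snd \<pi>' (h x)" and x: "x \<in> A"
  shows "length_contrib A \<pi> x = length_contrib B \<pi>' (h x)"
proof -
  have img: "h ` A = B" and inj: "inj_on h A" using bij by (auto simp: bij_betw_def)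
  have "{q\<in>B. h x < q \<and> fst \<pi>' q < fst \<pi>' (h x)} = h ` {q\<in>A. x < q \<and> fst \<pi> q < fst \<pi> x}"
    and "{q\<in>B. q < h x \<and> fst \<pi>' q < fst \<pi>' (h x)} = h ` {q\<in>A. q < x \<and> fst \<pi> q < fst \<pi> x}"
    using img mono eq x by auto
  moreover have "card (h ` {q\<in>A. P q}) = card {q\<in>A. P q}" for P
    by (rule card_image) (rule inj_on_subset[OF inj], auto)
  ultimately show ?thesis unfolding length_contrib_def using eq x by simp
qed

lemma length_sum_insert_shift:
  assumes \<pi>: "\<pi> \<in> Grn r (n-1)" and c: "c \<in> {1..n}"
  shows "length_sum {1..n} (insert_shift n \<pi> c e)
       = length_sum {1..n-1} \<pi> + (n - c) + (if e > 0 then 2 * (c - 1) + e else 0)"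
proof -
  define A where "A = {1..n} - {c}"
  define \<pi>' where "\<pi>' = insert_shift n \<pi> c e"
  have at_c: "fst \<pi>' c = n" "snd \<pi>' c = e" using insert_shift_at[OF \<pi>] by (simp_all add: \<pi>'_def)
  have less: "x \<in> A \<Longrightarrow> fst \<pi>' x < n" for x using insert_shift_less[OF \<pi> c] by (simp add: \<pi>'_def A_def)
  have off_c: "length_contrib {1..n} \<pi>' x = length_contrib {1..n-1} \<pi> (move_to_end n c x)" if x: "x \<in> A" for x
  proof -
    have "{q\<in>{1..n}. P q \<and> fst \<pi>' q < fst \<pi>' x} = {q\<in>A. P q \<and> fst \<pi>' q < fst \<pi>' x}" for P
      using at_c less[OF x] by (auto simp: A_def)
    then have "length_contrib {1..n} \<pi>' x = length_contrib A \<pi>' x" by (simp add: length_contrib_def)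
    also have "\<dots> = length_contrib {1..n-1} \<pi> (move_to_end n c x)"
      by (rule length_contrib_reindex[OF bij_betw_move_to_end[OF c, folded A_def] _ _ x])
        (use move_to_end_less_iff[OF c] insert_shift_off in \<open>auto simp: A_def \<pi>'_def\<close>)
    finally show ?thesis .
  qed
  have "{q\<in>{1..n}. c < q \<and> fst \<pi>' q < fst \<pi>' c} = {c<..n}"
    and "{q\<in>{1..n}. q < c \<and> fst \<pi>' q < fst \<pi>' c} = {1..<c}"
    using at_c less c by (auto simp: A_def)
  then have at_c_contrib: "length_contrib {1..n} \<pi>' c = (n - c) + (if e > 0 then 2 * (c - 1) + e else 0)"
    using at_c by (simp add: length_contrib_def)
  have "length_sum {1..n} \<pi>' = length_contrib {1..n} \<pi>' c + (\<Sum>x\<in>A. length_contrib {1..n} \<pi>' x)"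
    unfolding length_sum_def A_def by (rule sum.remove) (use c in auto)
  also have "(\<Sum>x\<in>A. length_contrib {1..n} \<pi>' x) = (\<Sum>x\<in>A. length_contrib {1..n-1} \<pi> (move_to_end n c x))"
    using off_c by simp
  also have "\<dots> = length_sum {1..n-1} \<pi>"
    unfolding length_sum_def A_def by (rule sum.reindex_bij_betw[OF bij_betw_move_to_end[OF c]])
  finally show ?thesis using at_c_contrib by (simp add: \<pi>'_def)
qed

lemma Setcompr_reindex:
  assumes "h ` A = B" "\<forall>x\<in>A. F x = G (h x) \<and> (P x \<longleftrightarrow> Q (h x))"
  shows "{F x |x. x \<in> A \<and> P x} = {G y |y. y \<in> B \<and> Q y}"
proof (rule set_eqI, rule iffI)
  fix v assume "v \<in> {F x |x. x \<in> A \<and> P x}"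
  then show "v \<in> {G y |y. y \<in> B \<and> Q y}" using assms by blast
next
  fix v assume "v \<in> {G y |y. y \<in> B \<and> Q y}"
  then obtain x where "x \<in> A" "v = G (h x)" "Q (h x)" using assms(1) by blast
  moreover from this have "F x = v" "P x" using assms(2) by auto
  ultimately show "v \<in> {F x |x. x \<in> A \<and> P x}" by (intro CollectI exI[of _ x]) auto
qed

definition side_minima :: "(nat \<Rightarrow> nat \<Rightarrow> bool) \<Rightarrow> nat \<Rightarrow> cperm \<Rightarrow> nat \<Rightarrow> nat set" where
  "side_minima R n \<pi> t =
     {fst \<pi> i |i. i \<in> {1..n} \<and> (\<forall>j\<in>{1..n}. R i j \<longrightarrow> fst \<pi> i < fst \<pi> j) \<and> snd \<pi> i = t}"

lemma Rmil_eq_side_minima: "Rmil n \<pi> t = side_minima (<) n \<pi> t"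
  unfolding Rmil_def side_minima_def by (rule arg_cong[where f = Collect]) (auto simp: fun_eq_iff)

lemma Lmil_eq_side_minima: "Lmil n \<pi> t = side_minima (\<lambda>i j. j < i) n \<pi> t"
  unfolding Lmil_def side_minima_def by (rule arg_cong[where f = Collect]) (auto simp: fun_eq_iff)

lemma side_minima_insert_shift:
  assumes \<pi>: "\<pi> \<in> Grn r (n-1)" and c: "c \<in> {1..n}"
    and R: "\<And>x y. x \<in> {1..n} - {c} \<Longrightarrow> y \<in> {1..n} - {c} \<Longrightarrow>
              R (move_to_end n c x) (move_to_end n c y) \<longleftrightarrow> R x y"
  shows "side_minima R n (insert_shift n \<pi> c e) t
       = side_minima R (n-1) \<pi> t \<union> (if (\<forall>j\<in>{1..n}. \<not> R c j) \<and> e = t then {n} else {})"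
proof -
  define A where "A = {1..n} - {c}"
  define h where "h = move_to_end n c"
  define \<pi>' where "\<pi>' = insert_shift n \<pi> c e"
  have at_c: "fst \<pi>' c = n" "snd \<pi>' c = e" using insert_shift_at[OF \<pi>] by (simp_all add: \<pi>'_def)
  have less: "x \<in> A \<Longrightarrow> fst \<pi>' x < n" for x using insert_shift_less[OF \<pi> c] by (simp add: \<pi>'_def A_def)
  have off_c: "fst \<pi>' x = fst \<pi> (h x)" "snd \<pi>' x = snd \<pi> (h x)" if "x \<in> A" for x
    using that insert_shift_off by (auto simp: A_def \<pi>'_def h_def)
  have img: "h ` A = {1..n-1}" using move_to_end_image[OF c] by (simp add: A_def h_def)
  define Q where "Q \<sigma> m i \<longleftrightarrow> (\<forall>j\<in>{1..m}. R i j \<longrightarrow> fst \<sigma> i < fst \<sigma> j) \<and> snd \<sigma> i = t"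
    for \<sigma> :: cperm and m i
  have Q_off_c: "Q \<pi>' n i \<longleftrightarrow> Q \<pi> (n-1) (h i)" if i: "i \<in> A" for i
  proof -
    have "(\<forall>j\<in>{1..n}. R i j \<longrightarrow> fst \<pi>' i < fst \<pi>' j) \<longleftrightarrow> (\<forall>j\<in>A. R i j \<longrightarrow> fst \<pi>' i < fst \<pi>' j)"
      using at_c less[OF i] by (auto simp: A_def)
    also have "\<dots> \<longleftrightarrow> (\<forall>j\<in>A. R (h i) (h j) \<longrightarrow> fst \<pi> (h i) < fst \<pi> (h j))"
      using off_c R i by (auto simp: A_def h_def)
    also have "\<dots> \<longleftrightarrow> (\<forall>j\<in>{1..n-1}. R (h i) j \<longrightarrow> fst \<pi> (h i) < fst \<pi> j)"
      unfolding img[symmetric] by (simp add: Ball_image_comp)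
    finally show ?thesis using off_c i by (simp add: Q_def)
  qed
  have Q_c: "Q \<pi>' n c \<longleftrightarrow> (\<forall>j\<in>{1..n}. \<not> R c j) \<and> e = t"
    using at_c less by (fastforce simp: Q_def A_def)
  have "side_minima R n \<pi>' t = {fst \<pi>' i |i. i \<in> A \<and> Q \<pi>' n i} \<union> (if Q \<pi>' n c then {fst \<pi>' c} else {})"
    using c by (auto simp: side_minima_def Q_def A_def)
  also have "{fst \<pi>' i |i. i \<in> A \<and> Q \<pi>' n i} = side_minima R (n-1) \<pi> t"
    unfolding side_minima_def Q_def[symmetric] using img off_c Q_off_c by (intro Setcompr_reindex) auto
  finally show ?thesis unfolding \<pi>'_def[symmetric] Q_c at_c .
qed

lemma Rmil_insert_shift:
  assumes "\<pi> \<in> Grn r (n-1)" "c \<in> {1..n}"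
  shows "Rmil n (insert_shift n \<pi> c e) t = Rmil (n-1) \<pi> t \<union> (if c = n \<and> e = t then {n} else {})"
proof -
  have "(\<forall>j\<in>{1..n}. \<not> c < j) \<longleftrightarrow> c = n" using assms(2) by auto
  then show ?thesis unfolding Rmil_eq_side_minima
    using side_minima_insert_shift[OF assms, of "(<)"] move_to_end_less_iff[OF assms(2)] by simp
qed

lemma Lmil_insert_shift:
  assumes "\<pi> \<in> Grn r (n-1)" "c \<in> {1..n}"
  shows "Lmil n (insert_shift n \<pi> c e) t = Lmil (n-1) \<pi> t \<union> (if c = 1 \<and> e = t then {n} else {})"
proof -
  have "(\<forall>j\<in>{1..n}. \<not> j < c) \<longleftrightarrow> c = 1" using assms(2) by (auto dest: bspec[of _ _ 1])
  then show ?thesis unfolding Lmil_eq_side_minima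
    using side_minima_insert_shift[OF assms, of "\<lambda>i j. j < i"] move_to_end_less_iff[OF assms(2)] by simp
qed

definition lr_maxima :: "nat \<Rightarrow> cperm \<Rightarrow> (nat \<times> nat \<times> nat) set" where
  "lr_maxima n \<pi> = {(p, fst \<pi> p, snd \<pi> p) |p. p \<in> {1..n} \<and> (\<forall>j\<in>{1..<p}. fst \<pi> j < fst \<pi> p)}"

lemma Lmal_eq_lr_maxima: "Lmal n \<pi> t = {v. \<exists>p. (p, v, t) \<in> lr_maxima n \<pi>}"
  unfolding Lmal_def lr_maxima_def by blast

lemma Lmap_eq_lr_maxima: "Lmap n \<pi> t = {p. \<exists>v. (p, v, t) \<in> lr_maxima n \<pi>}"
  unfolding Lmap_def lr_maxima_def by blast

lemma lr_maxima_insert: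
  assumes c: "c \<in> {1..n}" and at_c: "fst \<pi> c = n" "snd \<pi> c = e"
    and before_c: "\<forall>p<c. fst \<pi> p = fst \<pi>' p \<and> snd \<pi> p = snd \<pi>' p"
    and le: "\<forall>p\<in>{1..n}. fst \<pi> p \<le> n" and \<pi>': "fst \<pi>' permutes {1..n-1}"
  shows "lr_maxima n \<pi> = {x \<in> lr_maxima (n-1) \<pi>'. fst x < c} \<union> {(c, n, e)}"
proof -
  have less: "fst \<pi>' j < n" if "j \<in> {1..n-1}" for j using that permutes_in_image[OF \<pi>', of j] by auto
  have mem: "p \<in> {1..n} \<and> (\<forall>j\<in>{1..<p}. fst \<pi> j < fst \<pi> p)
    \<longleftrightarrow> (p \<in> {1..n-1} \<and> (\<forall>j\<in>{1..<p}. fst \<pi>' j < fst \<pi>' p) \<and> p < c) \<or> p = c" for p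
  proof -
    consider "p < c" | "p = c" | "c < p" by linarith
    then show ?thesis
    proof cases
      case 1
      then show ?thesis using c before_c by auto
    next
      case 2
      then show ?thesis using c at_c before_c less by auto
    next
      case 3
      then have "c \<in> {1..<p}" using c by auto
      then show ?thesis using 3 at_c le by fastforce
    qed
  qed
  have "lr_maxima n \<pi> = {(p, fst \<pi> p, snd \<pi> p) |p.
      p \<in> {1..n-1} \<and> (\<forall>j\<in>{1..<p}. fst \<pi>' j < fst \<pi>' p) \<and> p < c} \<union> {(c, n, e)}"
    unfolding lr_maxima_def mem using at_c by blast
  also have "{(p, fst \<pi> p, snd \<pi> p) |p. p \<in> {1..n-1} \<and> (\<forall>j\<in>{1..<p}. fst \<pi>' j < fst \<pi>' p) \<and> p < c}
      = {x \<in> lr_maxima (n-1) \<pi>'. fst x < c}"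
    using before_c unfolding lr_maxima_def by force
  finally show ?thesis .
qed

lemma lr_maxima_insert_shift:
  assumes \<pi>: "\<pi> \<in> Grn r (n-1)" and c: "c \<in> {1..n}"
  shows "lr_maxima n (insert_shift n \<pi> c e) = {x \<in> lr_maxima (n-1) \<pi>. fst x < c} \<union> {(c, n, e)}"
proof (rule lr_maxima_insert[OF c insert_shift_at[OF \<pi>]])
  have s: "fst \<pi> permutes {1..n-1}" using Grn_perm[OF \<pi>] .
  then show "fst \<pi> permutes {1..n-1}" .
  show "\<forall>p<c. fst (insert_shift n \<pi> c e) p = fst \<pi> p \<and> snd (insert_shift n \<pi> c e) p = snd \<pi> p"
    by (simp add: insert_shift_def move_to_end_def)
  have "fst (insert_shift n \<pi> c e) permutes {1..n}"
    unfolding insert_shift_def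
      using permutes_compose[OF move_to_end_permutes[OF c] permutes_extend_last[OF s]] by simp
  then show "\<forall>p\<in>{1..n}. fst (insert_shift n \<pi> c e) p \<le> n" using permutes_in_image by fastforce
qed

section \<open>Swap insertion: sor, Cyc and Lmic\<close>

lemma sor_rec_Suc:
  fixes r k c :: nat and \<tau> y :: "nat \<Rightarrow> nat"
  assumes c: "c \<in> {1..Suc k}" "\<tau> c = Suc k" and uniq: "\<forall>p\<in>{1..Suc k}. \<tau> p = Suc k \<longrightarrow> p = c"
  defines "e \<equiv> (r - y c mod r) mod r"
  shows "sor_rec r (Suc k) \<tau> y = (Suc k - c) + (if e > 0 then 2 * (c - 1) + e else 0)
    + sor_rec r k (if c < Suc k then \<tau>(c := \<tau> (Suc k)) else \<tau>)
                  (if c < Suc k then y(c := (y (Suc k) + r - e) mod r) else y)"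
proof -
  have "(THE p. p \<in> {1..Suc k} \<and> \<tau> p = Suc k) = c" using c uniq by (intro the_equality) blast+
  then show ?thesis unfolding e_def sor_rec.simps(2)[of r k \<tau> y] Let_def by (rule arg_cong)
qed

lemma sor_rec_cong:
  assumes "r \<ge> 1"
  shows "(\<tau>', y') \<in> Grn r k \<Longrightarrow> \<forall>p\<in>{1..k}. \<tau> p = \<tau>' p \<and> y p = y' p \<Longrightarrow> sor_rec r k \<tau> y = sor_rec r k \<tau>' y'"
proof (induction k arbitrary: \<tau> y \<tau>' y')
  case (Suc k)
  have s: "\<tau>' permutes {1..Suc k}" and y'r: "\<And>i. y' i < r" and y'0: "\<And>i. i \<notin> {1..Suc k} \<Longrightarrow> y' i = 0"
    using Suc.prems(1) Grn_color_less[OF Suc.prems(1) assms] by (auto simp: Grn_def)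
  define c where "c = inv \<tau>' (Suc k)"
  have c: "c \<in> {1..Suc k}" "\<tau>' c = Suc k" "\<tau> c = Suc k"
    using permutes_in_image[OF permutes_inv[OF s], of "Suc k"] permutes_inverses(1)[OF s] Suc.prems(2)
    by (auto simp: c_def)
  have "p = c" if "\<tau>' p = Suc k" for p using permutes_inverses(2)[OF s, of p] that by (simp add: c_def)
  then have uniq: "\<forall>p\<in>{1..Suc k}. \<tau>' p = Suc k \<longrightarrow> p = c" "\<forall>p\<in>{1..Suc k}. \<tau> p = Suc k \<longrightarrow> p = c"
    using Suc.prems(2) by auto
  define e where "e = (r - y' c mod r) mod r"
  have e: "(r - y c mod r) mod r = e" using Suc.prems(2) c by (simp add: e_def)
  text \<open>Both remaining words agree on {1..k} with the following word of G_{r,k}.\<close>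
  define \<tau>'' where "\<tau>'' = \<tau>' \<circ> transpose c (Suc k)"
  define y'' where "y'' = (if c < Suc k then y'(c := (y' (Suc k) + r - e) mod r) else y')(Suc k := 0)"
  have "transpose c (Suc k) permutes {1..Suc k}" using c by (intro permutes_swap_id) auto
  then have "\<tau>'' permutes {1..Suc k}" unfolding \<tau>''_def using permutes_compose[OF _ s] by blast
  then have "\<tau>'' permutes {1..k}"
    using permutes_shrink_last[of \<tau>'' "Suc k"] c by (simp add: \<tau>''_def)
  then have in_Grn: "(\<tau>'', y'') \<in> Grn r k" using y'r y'0 assms c by (auto simp: y''_def Grn_def)
  have IH: "sor_rec r k (if c < Suc k then \<tau>(c := \<tau> (Suc k)) else \<tau>)
                    (if c < Suc k then y(c := (y (Suc k) + r - e) mod r) else y) = sor_rec r k \<tau>'' y''"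
      "sor_rec r k (if c < Suc k then \<tau>'(c := \<tau>' (Suc k)) else \<tau>')
                    (if c < Suc k then y'(c := (y' (Suc k) + r - e) mod r) else y') = sor_rec r k \<tau>'' y''"
    using Suc.prems(2) c by (intro Suc.IH[OF in_Grn] ballI; cases "c < Suc k"; simp add: \<tau>''_def y''_def)+
  show ?case
    unfolding sor_rec_Suc[OF c(1,3) uniq(2)] sor_rec_Suc[OF c(1,2) uniq(1)] e e_def[symmetric] IH ..
qed simp

lemma sor_insert_swap:
  assumes \<pi>: "\<pi> \<in> Grn r (n-1)" and c: "c \<in> {1..n}" and e: "e < r" and r: "r \<ge> 1"
  shows "sor r n (insert_swap r n \<pi> c e) = (n - c) + (if e > 0 then 2 * (c - 1) + e else 0) + sor r (n-1) \<pi>"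
proof -
  obtain s z where \<pi>_eq: "\<pi> = (s, z)" by force
  have s: "s permutes {1..n-1}" and zr: "\<And>i. z i < r"
    using \<pi> Grn_color_less[OF \<pi> r] by (auto simp: \<pi>_eq Grn_def)
  obtain k where k: "n = Suc k" using c by (cases n) auto
  define \<tau> where "\<tau> = s \<circ> transpose c n"
  define y where
    "y = (if c = n then z(n := (r - e) mod r) else z(c := (r - e) mod r, n := (z c + e) mod r))"
  have "transpose c n permutes {1..n}" using c by (intro permutes_swap_id) auto
  then have P: "\<tau> permutes {1..n}" unfolding \<tau>_def
    using permutes_compose permutes_extend_last[OF s] by blast
  have \<tau>c: "\<tau> c = n" using permutes_fixes_last[OF s] by (simp add: \<tau>_def)
  have uniq: "\<forall>p\<in>{1..n}. \<tau> p = n \<longrightarrow> p = c" using \<tau>c injD[OF permutes_inj[OF P]] by metis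
  have color_c: "(r - y c mod r) mod r = e" using neg_mod_neg_mod[OF e] by (simp add: y_def)
  have "((z c + e) mod r + r - e) mod r = z c" using add_sub_mod_cancel[of e r "z c"] e zr[of c] by simp
  then have "\<forall>p\<in>{1..k}. (if c < Suc k then \<tau>(c := \<tau> (Suc k)) else \<tau>) p = s p
      \<and> (if c < Suc k then y(c := (y (Suc k) + r - e) mod r) else y) p = z p"
    using c k by (auto simp: \<tau>_def y_def)
  then have rest: "sor_rec r k (if c < Suc k then \<tau>(c := \<tau> (Suc k)) else \<tau>)
      (if c < Suc k then y(c := (y (Suc k) + r - e) mod r) else y) = sor_rec r k s z"
    using \<pi> k by (intro sor_rec_cong[OF r]) (simp_all add: \<pi>_eq)
  have "insert_swap r n \<pi> c e = (\<tau>, y)" by (simp add: insert_swap_def \<pi>_eq \<tau>_def y_def)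
  then have "sor r n (insert_swap r n \<pi> c e) = sor_rec r (Suc k) \<tau> y" unfolding sor_def k by simp
  also have "\<dots> = (Suc k - c) + (if e > 0 then 2 * (c - 1) + e else 0) + sor_rec r k s z"
    using sor_rec_Suc[of c k \<tau> r y, unfolded color_c rest] c \<tau>c uniq unfolding k by blast
  finally show ?thesis unfolding sor_def \<pi>_eq k by simp
qed

text \<open>Suppose f agrees with g except that at the points satisfying P it needs two steps to reach
  the g-image.  Then k steps of g from x are refined_index g P x k steps of f.\<close>

definition refined_index :: "('a \<Rightarrow> 'a) \<Rightarrow> ('a \<Rightarrow> bool) \<Rightarrow> 'a \<Rightarrow> nat \<Rightarrow> nat" where
  "refined_index g P x k = k + card {l. l < k \<and> P ((g ^^ l) x)}"

lemma refined_index_0 [simp]: "refined_index g P x 0 = 0"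
  by (simp add: refined_index_def)

lemma refined_index_Suc:
  "refined_index g P x (Suc k) = refined_index g P x k + (if P ((g ^^ k) x) then 2 else 1)"
proof -
  have "{l. l < Suc k \<and> P ((g ^^ l) x)} = {l. l < k \<and> P ((g ^^ l) x)} \<union> (if P ((g ^^ k) x) then {k} else {})"
    by (auto simp: less_Suc_eq)
  then show ?thesis by (simp add: refined_index_def)
qed

lemma strict_mono_refined_index: "strict_mono (refined_index g P x)"
  unfolding strict_mono_Suc_iff by (simp add: refined_index_Suc)

lemma refined_index_cases:
  obtains k where "m = refined_index g P x k"
    | k where "m = refined_index g P x k + 1" "P ((g ^^ k) x)"
proof -
  have "\<exists>k. refined_index g P x k \<le> m \<and> m < refined_index g P x (Suc k)"
  proof (induction m)
    case 0
    then show ?case by (intro exI[of _ 0]) (simp add: refined_index_Suc)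
  next
    case (Suc m)
    then obtain k where k: "refined_index g P x k \<le> m" "m < refined_index g P x (Suc k)" by blast
    show ?case
    proof (cases "Suc m < refined_index g P x (Suc k)")
      case True
      then show ?thesis using k by (intro exI[of _ k]) simp
    next
      case False
      then show ?thesis
        using k strict_monoD[OF strict_mono_refined_index[of g P x], of "Suc k" "Suc (Suc k)"]
        by (intro exI[of _ "Suc k"]) simp
    qed
  qed
  then obtain k where "refined_index g P x k \<le> m" "m < refined_index g P x (Suc k)" by blast
  then have "m = refined_index g P x k \<or> (m = refined_index g P x k + 1 \<and> P ((g ^^ k) x))"
    by (auto simp: refined_index_Suc split: if_splits)
  then show thesis using that by blast
qed

lemma funpow_refined_index:
  assumes one: "\<And>k. \<not> P ((g ^^ k) x) \<Longrightarrow> f ((g ^^ k) x) = g ((g ^^ k) x)"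
    and two: "\<And>k. P ((g ^^ k) x) \<Longrightarrow> f (f ((g ^^ k) x)) = g ((g ^^ k) x)"
  shows "(g ^^ k) x = (f ^^ refined_index g P x k) x"
proof (induction k)
  case (Suc k)
  then show ?case using one[of k] two[of k] by (cases "P ((g ^^ k) x)") (simp_all add: refined_index_Suc)
qed simp

lemma orbit_refinement:
  assumes one: "\<And>k. \<not> P ((g ^^ k) x) \<Longrightarrow> f ((g ^^ k) x) = g ((g ^^ k) x)"
    and two: "\<And>k. P ((g ^^ k) x) \<Longrightarrow> f (f ((g ^^ k) x)) = g ((g ^^ k) x)"
  shows "{(f ^^ m) x |m. True} = {(g ^^ m) x |m. True} \<union> {f ((g ^^ k) x) |k. P ((g ^^ k) x)}"
proof (rule set_eqI, rule iffI)
  fix y assume "y \<in> {(f ^^ m) x |m. True}"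
  then obtain m where y: "y = (f ^^ m) x" by blast
  show "y \<in> {(g ^^ m) x |m. True} \<union> {f ((g ^^ k) x) |k. P ((g ^^ k) x)}"
  proof (cases rule: refined_index_cases[of m g P x])
    case (1 k)
    then have "y = (g ^^ k) x" using y funpow_refined_index[OF one two, where k = k] by simp
    then show ?thesis by blast
  next
    case (2 k)
    then have "y = f ((g ^^ k) x)" using y funpow_refined_index[OF one two, where k = k] by simp
    then show ?thesis using 2 by blast
  qed
next
  fix y assume "y \<in> {(g ^^ m) x |m. True} \<union> {f ((g ^^ k) x) |k. P ((g ^^ k) x)}"
  then consider k where "y = (g ^^ k) x" | k where "y = f ((g ^^ k) x)" by blast
  then show "y \<in> {(f ^^ m) x |m. True}"
  proof cases
    case (1 k)
    then have "y = (f ^^ refined_index g P x k) x"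
      using funpow_refined_index[OF one two, where k = k] by simp
    then show ?thesis by blast
  next
    case (2 k)
    then have "y = (f ^^ Suc (refined_index g P x k)) x"
      using funpow_refined_index[OF one two, where k = k] by simp
    then show ?thesis by blast
  qed
qed

lemma cycle_of_self: "x \<in> cycle_of s x"
  unfolding cycle_of_def by (auto intro: exI[of _ 0])

lemma cycle_of_subset: "s permutes {1..m::nat} \<Longrightarrow> x \<in> {1..m} \<Longrightarrow> cycle_of s x \<subseteq> {1..m}"
  unfolding cycle_of_def using permutes_in_funpow_image by fastforce

lemma cycle_of_fixpoint: "s x = x \<Longrightarrow> cycle_of s x = {x}"
proof -
  assume "s x = x"
  then have "(s ^^ m) x = x" for m by (induction m) auto
  then show ?thesis unfolding cycle_of_def by auto
qed

lemma cycle_of_eq_orbit: "permutation s \<Longrightarrow> cycle_of s x = orbit s x"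
  by (simp add: cycle_of_def orbit_altdef_permutation)

lemma cycle_of_apply: "permutation s \<Longrightarrow> cycle_of s (s x) = cycle_of s x"
  by (simp add: cycle_of_eq_orbit permutation_orbit_step)

lemma cycle_of_transpose_last:
  assumes s: "s permutes {1..n-1}" and c: "c \<in> {1..n-1}" and i: "i \<in> {1..n-1}"
  shows "cycle_of (s \<circ> transpose c n) i = cycle_of s i \<union> (if c \<in> cycle_of s i then {n} else {})"
proof -
  define \<sigma> where "\<sigma> = s \<circ> transpose c n"
  have in_range: "(s ^^ k) i \<in> {1..n-1}" for k using permutes_in_funpow_image[OF s i] .
  have one: "\<sigma> ((s ^^ k) i) = s ((s ^^ k) i)" if "(s ^^ k) i \<noteq> c" for k
    using that in_range[of k] by (auto simp: \<sigma>_def transpose_def)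
  have two: "\<sigma> (\<sigma> ((s ^^ k) i)) = s ((s ^^ k) i)" if "(s ^^ k) i = c" for k
    using that c permutes_fixes_last[OF s] by (simp add: \<sigma>_def)
  have \<sigma>c: "\<sigma> c = n" using permutes_fixes_last[OF s] by (simp add: \<sigma>_def)
  have "cycle_of \<sigma> i = cycle_of s i \<union> {\<sigma> ((s ^^ k) i) |k. (s ^^ k) i = c}"
    unfolding cycle_of_def by (rule orbit_refinement[where P = "\<lambda>x. x = c", OF one two])
  also have "{\<sigma> ((s ^^ k) i) |k. (s ^^ k) i = c} = (if c \<in> cycle_of s i then {n} else {})"
    using \<sigma>c by (auto simp: cycle_of_def)
  finally show ?thesis unfolding \<sigma>_def .
qed

lemma cycles_transpose_last:
  assumes s: "s permutes {1..n-1}" and c: "c \<in> {1..n-1}"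
  shows "cycle_of (s \<circ> transpose c n) ` {1..n}
       = (\<lambda>B. if c \<in> B then insert n B else B) ` (cycle_of s ` {1..n-1})"
proof -
  define \<sigma> where "\<sigma> = s \<circ> transpose c n"
  have "transpose c n permutes {1..n}" using c by (intro permutes_swap_id) auto
  then have "\<sigma> permutes {1..n}" unfolding \<sigma>_def using permutes_compose permutes_extend_last[OF s] by blast
  then have "cycle_of \<sigma> (\<sigma> c) = cycle_of \<sigma> c" by (intro cycle_of_apply permutes_imp_permutation) auto
  moreover have "\<sigma> c = n" using permutes_fixes_last[OF s] by (simp add: \<sigma>_def)
  ultimately have "cycle_of \<sigma> n = cycle_of \<sigma> c" by simp
  moreover have "{1..n} = insert c {1..n-1} \<union> {n}" using c by auto
  ultimately have "cycle_of \<sigma> ` {1..n} = cycle_of \<sigma> ` {1..n-1}" using c by auto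
  also have "\<dots> = (\<lambda>i. if c \<in> cycle_of s i then insert n (cycle_of s i) else cycle_of s i) ` {1..n-1}"
    using cycle_of_transpose_last[OF s c] by (intro image_cong) (auto simp: \<sigma>_def)
  finally show ?thesis unfolding \<sigma>_def image_image .
qed

lemma cycles_subset_nonempty:
  assumes s: "s permutes {1..m::nat}" and B: "B \<in> cycle_of s ` {1..m}"
  shows "B \<subseteq> {1..m}" "B \<noteq> {}" "finite B"
  using B cycle_of_subset[OF s] cycle_of_self finite_subset by blast+

lemma Setcompr_insert:
  "{F x |x. x \<in> insert a A \<and> P x} = {F x |x. x \<in> A \<and> P x} \<union> (if P a then {F a} else {})"
  by auto

lemma Cyc_insert_swap_last:
  assumes \<pi>: "\<pi> \<in> Grn r (n-1)" and n: "n \<ge> 1"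
  shows "Cyc r n (insert_swap r n \<pi> n e) t = Cyc r (n-1) \<pi> t \<union> (if (r - e) mod r = t then {n} else {})"
proof -
  obtain s z where \<pi>_eq: "\<pi> = (s, z)" by force
  have s: "s permutes {1..n-1}" using \<pi> by (simp add: \<pi>_eq Grn_def)
  define T where "T = cycle_of s ` {1..n-1}"
  have "n \<notin> {1..n-1}" by auto
  then have "n \<notin> B" if "B \<in> T" for B using cycles_subset_nonempty(1)[OF s that[unfolded T_def]] by blast
  then have sums: "(\<Sum>k\<in>B. (z(n := (r - e) mod r)) k) = (\<Sum>k\<in>B. z k)" if "B \<in> T" for B
    using that by (intro sum.cong) auto
  have "{1..n} = insert n {1..n-1}" using n by auto
  then have "cycle_of s ` {1..n} = insert {n} T"
    using cycle_of_fixpoint[of s n, OF permutes_fixes_last[OF s]] by (simp add: T_def)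
  then have "Cyc r n (insert_swap r n \<pi> n e) t
      = {Min B |B. B \<in> insert {n} T \<and> (\<Sum>k\<in>B. (z(n := (r - e) mod r)) k) mod r = t}"
    by (simp add: Cyc_def insert_swap_def \<pi>_eq)
  also have "\<dots> = {Min B |B. B \<in> T \<and> (\<Sum>k\<in>B. z k) mod r = t} \<union> (if (r - e) mod r = t then {n} else {})"
  proof -
    have "B \<in> T \<and> (\<Sum>k\<in>B. (z(n := (r - e) mod r)) k) mod r = t \<longleftrightarrow> B \<in> T \<and> (\<Sum>k\<in>B. z k) mod r = t" for B
      using sums by auto
    then show ?thesis unfolding Setcompr_insert by simp
  qed
  finally show ?thesis by (simp add: Cyc_def T_def \<pi>_eq)
qed

lemma cycle_insert_after:
  fixes z :: "nat \<Rightarrow> nat"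
  assumes fin: "finite B" and ne: "B \<noteq> {}" and B: "B \<subseteq> {1..n-1}" and c: "c \<noteq> n" and e: "e < r"
  shows "Min (if c \<in> B then insert n B else B) = Min B"
    and "(\<Sum>k\<in>(if c \<in> B then insert n B else B). (z(c := (r - e) mod r, n := (z c + e) mod r)) k) mod r
       = (\<Sum>k\<in>B. z k) mod r"
proof -
  let ?zz = "z(c := (r - e) mod r, n := (z c + e) mod r)"
  have "n \<notin> {1..n-1}" by auto
  then have nB: "n \<notin> B" using B by blast
  have rest: "(\<Sum>k\<in>B - {c}. ?zz k) = (\<Sum>k\<in>B - {c}. z k)" using nB by (intro sum.cong) auto
  have "Min B < n" using Min_in[OF fin ne] B by fastforce
  then show "Min (if c \<in> B then insert n B else B) = Min B" using fin ne by (simp add: Min_insert)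
  show "(\<Sum>k\<in>(if c \<in> B then insert n B else B). (z(c := (r - e) mod r, n := (z c + e) mod r)) k) mod r
      = (\<Sum>k\<in>B. z k) mod r"
  proof (cases "c \<in> B")
    case True
    then have "(\<Sum>k\<in>insert n B. ?zz k) = (z c + e) mod r + ((r - e) mod r + (\<Sum>k\<in>B - {c}. z k))"
      using fin nB c sum.remove[OF fin True, of ?zz] rest by simp
    then have "(\<Sum>k\<in>insert n B. ?zz k) mod r = (z c + (\<Sum>k\<in>B - {c}. z k)) mod r"
      using add_neg_mod_cancel[of e r "z c"] e by (simp add: add.assoc)
    then show ?thesis using True sum.remove[OF fin True, of z] by simp
  next
    case False
    then have "(\<Sum>k\<in>B. ?zz k) = (\<Sum>k\<in>B. z k)" using nB by (intro sum.cong) auto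
    then show ?thesis using False by simp
  qed
qed

lemma Cyc_insert_swap_less:
  assumes \<pi>: "\<pi> \<in> Grn r (n-1)" and c: "c \<in> {1..n-1}" and e: "e < r"
  shows "Cyc r n (insert_swap r n \<pi> c e) t = Cyc r (n-1) \<pi> t"
proof -
  obtain s z where \<pi>_eq: "\<pi> = (s, z)" by force
  have s: "s permutes {1..n-1}" using \<pi> by (simp add: \<pi>_eq Grn_def)
  have "c \<noteq> n" using c by auto
  define T where "T = cycle_of s ` {1..n-1}"
  define G where "G B = (if c \<in> B then insert n B else B)" for B
  define zz where "zz = z(c := (r - e) mod r, n := (z c + e) mod r)"
  have "Min B = Min (G B) \<and> ((\<Sum>k\<in>B. z k) mod r = t \<longleftrightarrow> (\<Sum>k\<in>G B. zz k) mod r = t)" if "B \<in> T" for B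
    using cycle_insert_after[OF cycles_subset_nonempty(3,2,1)[OF s that[unfolded T_def]] \<open>c \<noteq> n\<close> e]
    by (simp add: G_def zz_def)
  then have "{Min B |B. B \<in> G ` T \<and> (\<Sum>k\<in>B. zz k) mod r = t} = {Min B |B. B \<in> T \<and> (\<Sum>k\<in>B. z k) mod r = t}"
    by (intro Setcompr_reindex[symmetric]) auto
  then show ?thesis using cycles_transpose_last[OF s c] \<open>c \<noteq> n\<close>
    by (simp add: Cyc_def insert_swap_def \<pi>_eq zz_def G_def T_def)
qed

lemma Cyc_insert_swap:
  assumes "\<pi> \<in> Grn r (n-1)" "c \<in> {1..n}" "e < r" "r \<ge> 1"
  shows "Cyc r n (insert_swap r n \<pi> c e) t
       = Cyc r (n-1) \<pi> t \<union> (if c = n \<and> (r - e) mod r = t then {n} else {})"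
  using Cyc_insert_swap_last[OF assms(1)] Cyc_insert_swap_less[OF assms(1) _ assms(3)] assms(2)
  by (cases "c = n") auto

definition walk_minima :: "(nat \<Rightarrow> nat \<times> nat) \<Rightarrow> nat \<Rightarrow> nat set" where
  "walk_minima w t = {fst (w k) |k. k \<ge> 1 \<and> (\<forall>l\<in>{1..<k}. fst (w k) < fst (w l)) \<and> snd (w k) = t}"

lemma cact_funpow_fst: "fst ((cact r \<pi> ^^ k) x) = (fst \<pi> ^^ k) (fst x)"
  by (induction k) (simp_all add: cact_def)

text \<open>The walk returns to 1 after m steps, and no later letter can be a new minimum.\<close>

lemma Lmic_eq_walk_minima:
  assumes \<pi>: "\<pi> \<in> Grn r n" and n: "n \<ge> 1"
  shows "Lmic r \<pi> t = walk_minima (\<lambda>k. (cact r \<pi> ^^ k) (1, 0)) t"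
proof -
  define w where "w k = (cact r \<pi> ^^ k) (1, 0)" for k
  have s: "fst \<pi> permutes {1..n}" using Grn_perm[OF \<pi>] .
  have in_range: "fst (w k) \<in> {1..n}" for k
    unfolding w_def cact_funpow_fst using permutes_in_funpow_image[OF s, of 1] n by simp
  obtain p where "p > 0" "(fst \<pi> ^^ p) 1 = 1"
    using permutation_self[OF permutes_imp_permutation[OF _ s]] by blast
  then have "\<exists>m. m \<ge> 1 \<and> fst (w m) = 1" unfolding w_def cact_funpow_fst by (intro exI[of _ p]) simp
  moreover define m where "m = (LEAST m. m \<ge> 1 \<and> fst (w m) = 1)"
  ultimately have m: "m \<ge> 1" "fst (w m) = 1" using LeastI_ex[of "\<lambda>m. m \<ge> 1 \<and> fst (w m) = 1"] by auto
  have "k \<in> {1..m} \<and> (\<forall>l\<in>{1..<k}. fst (w k) < fst (w l)) \<and> snd (w k) = t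
    \<longleftrightarrow> k \<ge> 1 \<and> (\<forall>l\<in>{1..<k}. fst (w k) < fst (w l)) \<and> snd (w k) = t" for k
  proof (cases "k \<le> m")
    case False
    then have "m \<in> {1..<k}" using m by auto
    then show ?thesis using m(2) in_range[of k] by fastforce
  qed auto
  then show ?thesis unfolding Lmic_def Let_def w_def[symmetric] m_def[symmetric] walk_minima_def by simp
qed

text \<open>A walk w' refined by a walk w that makes a detour to a letter N, larger than all letters of
  w', after each visit to c; it gains the minimum N exactly when the detour happens at the start.\<close>

context
  fixes g :: "nat \<Rightarrow> nat" and w w' :: "nat \<Rightarrow> nat \<times> nat" and c N :: nat
  assumes mono: "strict_mono g" and g0: "g 0 = 0" and w: "\<And>k. w (g k) = w' k"
    and cases: "\<And>m. (\<exists>k. m = g k) \<or> (\<exists>k. m = g k + 1 \<and> fst (w' k) = c)"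
    and detour: "\<And>k. fst (w' k) = c \<Longrightarrow> fst (w (g k + 1)) = N"
    and less: "\<And>k. fst (w' k) < N"
begin

lemma refinement_index_pos: "k \<ge> 1 \<Longrightarrow> g k \<ge> 1"
  using strict_monoD[OF mono, of 0 k] g0 by simp

lemma walk_minima_refinement_subset:
  "walk_minima w t \<subseteq> walk_minima w' t \<union> (if fst (w' 0) = c \<and> snd (w 1) = t then {N} else {})"
proof
  fix v assume "v \<in> walk_minima w t"
  then obtain K where K: "v = fst (w K)" "K \<ge> 1" "\<forall>l\<in>{1..<K}. fst (w K) < fst (w l)" "snd (w K) = t"
    unfolding walk_minima_def by blast
  from cases[of K]
  show "v \<in> walk_minima w' t \<union> (if fst (w' 0) = c \<and> snd (w 1) = t then {N} else {})"
  proof (elim disjE exE conjE)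
    fix k assume Kk: "K = g k"
    then have "k \<ge> 1" using K(2) g0 by (cases k) auto
    moreover have "fst (w' k) < fst (w' l)" if l: "l \<in> {1..<k}" for l
    proof -
      have "g l \<in> {1..<K}" using l strict_mono_less[OF mono, of l k] refinement_index_pos[of l] Kk by auto
      from K(3)[rule_format, OF this] show ?thesis using Kk w[of k] w[of l] by simp
    qed
    ultimately show ?thesis using K Kk w by (auto simp: walk_minima_def)
  next
    fix k assume Kk: "K = g k + 1" and at_c: "fst (w' k) = c"
    have k0: "k = 0"
    proof (rule ccontr)
      assume "k \<noteq> 0"
      then have "g k \<in> {1..<K}" using Kk refinement_index_pos[of k] by auto
      then show False using K(3) Kk detour[OF at_c] less[of k] w[of k] by fastforce
    qed
    then have "v = N" using K(1) Kk detour[OF at_c] by simp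
    then show ?thesis using K Kk k0 at_c g0 by simp
  qed
qed

lemma walk_minima_subset_refinement: "walk_minima w' t \<subseteq> walk_minima w t"
proof
  fix v assume "v \<in> walk_minima w' t"
  then obtain k where k: "v = fst (w' k)" "k \<ge> 1" "\<forall>l\<in>{1..<k}. fst (w' k) < fst (w' l)" "snd (w' k) = t"
    unfolding walk_minima_def by blast
  have "fst (w (g k)) < fst (w L)" if L: "L \<in> {1..<g k}" for L
    using cases[of L]
  proof (elim disjE exE conjE)
    fix l assume "L = g l"
    moreover from this have "l \<in> {1..<k}" using L strict_mono_less[OF mono, of l k] g0 by (cases l) auto
    ultimately show ?thesis using k(3) w by simp
  next
    fix l assume "L = g l + 1" "fst (w' l) = c"
    then show ?thesis using detour less[of k] w[of k] by simp
  qed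
  then show "v \<in> walk_minima w t" unfolding walk_minima_def using k refinement_index_pos[of k] w[of k]
    by (intro CollectI exI[of _ "g k"]) auto
qed

lemma walk_minima_refinement:
  "walk_minima w t = walk_minima w' t \<union> (if fst (w' 0) = c \<and> snd (w 1) = t then {N} else {})"
proof -
  have "fst (w' 0) = c \<Longrightarrow> snd (w 1) = t \<Longrightarrow> N \<in> walk_minima w t"
    using detour[of 0] g0 by (auto simp: walk_minima_def intro!: exI[of _ 1])
  then show ?thesis using walk_minima_refinement_subset[of t] walk_minima_subset_refinement[of t]
    by (cases "fst (w' 0) = c \<and> snd (w 1) = t") auto
qed

end

lemma insert_swap_in_Grn:
  assumes "\<pi> \<in> Grn r (n-1)" "c \<in> {1..n}" "e < r" "r \<ge> 1"
  shows "insert_swap r n \<pi> c e \<in> Grn r n"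
proof -
  have "\<forall>i\<in>{1..n-1}. fst \<pi> i \<le> n"
  proof
    fix i assume "i \<in> {1..n-1}"
    then show "fst \<pi> i \<le> n" using permutes_in_image[OF Grn_perm[OF assms(1)], of i] by auto
  qed
  then have "(\<pi>, c, e) \<in> insertion_data r n (\<lambda>_. n)"
    using assms by (cases \<pi>) (auto simp: insertion_data_def Grnf_def)
  then have "insert_swap r n \<pi> c e \<in> Grnf r n (\<lambda>_. n)" using insert_swap_in_Grnf[OF assms(4)] by simp
  then show ?thesis using Grnf_subset_Grn by blast
qed

lemma cact_insert_swap:
  assumes \<pi>: "\<pi> \<in> Grn r (n-1)" and e: "e < r"
  shows "fst x \<noteq> c \<Longrightarrow> fst x \<noteq> n \<Longrightarrow> cact r (insert_swap r n \<pi> c e) x = cact r \<pi> x"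
    and "fst x = c \<Longrightarrow> fst (cact r (insert_swap r n \<pi> c e) x) = n"
    and "fst x = c \<Longrightarrow> c \<noteq> n \<Longrightarrow> cact r (insert_swap r n \<pi> c e) (cact r (insert_swap r n \<pi> c e) x) = cact r \<pi> x"
proof -
  obtain s z where \<pi>_eq: "\<pi> = (s, z)" by force
  have s: "s permutes {1..n-1}" and zr: "z i < r" for i
    using \<pi> Grn_color_less[OF \<pi>, of i] e by (auto simp: \<pi>_eq Grn_def)
  obtain i v where x: "x = (i, v)" by force
  show "fst x \<noteq> c \<Longrightarrow> fst x \<noteq> n \<Longrightarrow> cact r (insert_swap r n \<pi> c e) x = cact r \<pi> x"
    by (auto simp: x cact_def insert_swap_def \<pi>_eq)
  show "fst x = c \<Longrightarrow> fst (cact r (insert_swap r n \<pi> c e) x) = n"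
    using permutes_fixes_last[OF s] by (simp add: x cact_def insert_swap_def \<pi>_eq)
  assume "fst x = c" "c \<noteq> n"
  then have "cact r (insert_swap r n \<pi> c e) (cact r (insert_swap r n \<pi> c e) x)
      = (s c, ((z c + e) mod r + ((r - e) mod r + v) mod r) mod r)"
    using permutes_fixes_last[OF s] by (simp add: x cact_def insert_swap_def \<pi>_eq)
  also have "((z c + e) mod r + ((r - e) mod r + v) mod r) mod r = (z c + v) mod r"
    using add_neg_mod_cancel[of e r "z c" v] e by (simp add: mod_add_right_eq add.assoc)
  finally show "cact r (insert_swap r n \<pi> c e) (cact r (insert_swap r n \<pi> c e) x) = cact r \<pi> x"
    using \<open>fst x = c\<close> by (simp add: x cact_def \<pi>_eq)
qed

text \<open>Along the walk of 1, the new word makes a detour through n right after each visit to c.\<close>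

lemma Lmic_insert_swap:
  assumes \<pi>: "\<pi> \<in> Grn r (n-1)" and c: "c \<in> {1..n}" and e: "e < r" and r: "r \<ge> 1" and n: "n \<ge> 2"
  shows "Lmic r (insert_swap r n \<pi> c e) t = Lmic r \<pi> t \<union> (if c = 1 \<and> (r - e) mod r = t then {n} else {})"
proof -
  define a where "a = cact r (insert_swap r n \<pi> c e)"
  define a' where "a' = cact r \<pi>"
  define w where "w k = (a ^^ k) (1, 0)" for k
  define w' where "w' k = (a' ^^ k) (1, 0)" for k
  define g where "g = refined_index a' (\<lambda>x. fst x = c) (1, 0)"
  have w'_range: "fst (w' k) \<in> {1..n-1}" for k
    unfolding w'_def a'_def cact_funpow_fst
      using permutes_in_funpow_image[OF Grn_perm[OF \<pi>], of 1] n by simp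
  have "n \<notin> {1..n-1}" by auto
  then have w'_n: "fst (w' k) \<noteq> n" for k using w'_range[of k] by metis
  note a_eq = cact_insert_swap[OF \<pi> e, where c = c, folded a_def a'_def]
  have one: "a (w' k) = a' (w' k)" if "fst (w' k) \<noteq> c" for k using a_eq(1) that w'_n by blast
  have two: "a (a (w' k)) = a' (w' k)" if "fst (w' k) = c" for k using a_eq(3) that w'_n by metis
  have w_g: "w (g k) = w' k" for k
    unfolding w_def g_def using one two unfolding w'_def by (intro funpow_refined_index[symmetric])
  have "walk_minima w t = walk_minima w' t \<union> (if fst (w' 0) = c \<and> snd (w 1) = t then {n} else {})"
  proof (rule walk_minima_refinement[where g = g and w = w and w' = w' and c = c and N = n])
    show "w (g k) = w' k" for k by (rule w_g)
    show "strict_mono g" "g 0 = 0" unfolding g_def by (simp_all add: strict_mono_refined_index)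
    show "(\<exists>k. m = g k) \<or> (\<exists>k. m = g k + 1 \<and> fst (w' k) = c)" for m
      by (rule refined_index_cases[of m a' "\<lambda>x. fst x = c" "(1, 0)"]) (auto simp: g_def w'_def)
    show "fst (w (g k + 1)) = n" if "fst (w' k) = c" for k
      using w_g[of k] a_eq(2)[OF that] by (simp add: w_def)
    show "fst (w' k) < n" for k using w'_range[of k] by auto
  qed
  moreover have "c = 1 \<Longrightarrow> snd (w 1) = (r - e) mod r"
    using n by (simp add: w_def a_def cact_def insert_swap_def split: prod.split)
  moreover have "Lmic r (insert_swap r n \<pi> c e) t = walk_minima w t"
    unfolding w_def a_def by (rule Lmic_eq_walk_minima[OF insert_swap_in_Grn[OF \<pi> c e r]]) (use n in simp)
  moreover have "Lmic r \<pi> t = walk_minima w' t"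
    unfolding w'_def a'_def by (rule Lmic_eq_walk_minima[OF \<pi>]) (use n in simp)
  ultimately show ?thesis by (auto simp: w'_def)
qed

lemma Lmic_insert_swap_one:
  assumes \<pi>: "\<pi> \<in> Grn r 0" and e: "e < r" and r: "r \<ge> 1"
  shows "Lmic r (insert_swap r 1 \<pi> 1 e) t = (if (r - e) mod r = t then {1} else {})"
proof -
  have in_Grn: "insert_swap r 1 \<pi> 1 e \<in> Grn r 1" using insert_swap_in_Grn[of \<pi> r 1 1 e] assms by simp
  define w where "w k = (cact r (insert_swap r 1 \<pi> 1 e) ^^ k) (1, 0)" for k
  have fst_w: "fst (w k) = 1" for k
    unfolding w_def cact_funpow_fst using permutes_in_funpow_image[OF Grn_perm[OF in_Grn], of 1] by simp
  have "snd (w 1) = (r - e) mod r" by (simp add: w_def cact_def insert_swap_def)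
  moreover have "k \<ge> 1 \<and> (\<forall>l\<in>{1..<k}. fst (w k) < fst (w l)) \<and> snd (w k) = t
      \<longleftrightarrow> k = 1 \<and> snd (w 1) = t" for k
  proof (cases "k \<ge> 2")
    case True
    then have "1 \<in> {1..<k}" by simp
    then show ?thesis using fst_w True by auto
  next
    case False
    then show ?thesis by (cases "k = 1") auto
  qed
  ultimately have "walk_minima w t = (if (r - e) mod r = t then {1} else {})"
    unfolding walk_minima_def using fst_w by simp
  then show ?thesis using Lmic_eq_walk_minima[OF in_Grn, of t] unfolding w_def by simp
qed

lemma lr_maxima_insert_swap:
  assumes \<pi>: "\<pi> \<in> Grn r (n-1)" and c: "c \<in> {1..n}"
  shows "lr_maxima n (insert_swap r n \<pi> c e) = {x \<in> lr_maxima (n-1) \<pi>. fst x < c} \<union> {(c, n, (r - e) mod r)}"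
proof (rule lr_maxima_insert[OF c])
  have s: "fst \<pi> permutes {1..n-1}" using Grn_perm[OF \<pi>] .
  then show "fst \<pi> permutes {1..n-1}" .
  show "fst (insert_swap r n \<pi> c e) c = n" "snd (insert_swap r n \<pi> c e) c = (r - e) mod r"
    using permutes_fixes_last[OF s] by (simp_all add: insert_swap_def)
  show "\<forall>p<c. fst (insert_swap r n \<pi> c e) p = fst \<pi> p \<and> snd (insert_swap r n \<pi> c e) p = snd \<pi> p"
    using c by (auto simp: insert_swap_def)
  have "transpose c n permutes {1..n}" using c by (intro permutes_swap_id) auto
  then have "fst (insert_swap r n \<pi> c e) permutes {1..n}"
    unfolding insert_swap_def using permutes_compose permutes_extend_last[OF s] by fastforce
  then show "\<forall>p\<in>{1..n}. fst (insert_swap r n \<pi> c e) p \<le> n" using permutes_in_image by fastforce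
qed

section \<open>The bijection\<close>

definition neg_color :: "nat \<Rightarrow> nat \<times> nat \<times> nat \<Rightarrow> nat \<times> nat \<times> nat" where
  "neg_color r x = (fst x, fst (snd x), (r - snd (snd x)) mod r)"

text \<open>The Lmil/Lmic clause is guarded by n \<ge> 1: on the empty word Lmic still reads off the
  fixed letter 1 and is not empty.\<close>

definition stats_correspond :: "nat \<Rightarrow> nat \<Rightarrow> cperm \<Rightarrow> cperm \<Rightarrow> bool" where
  "stats_correspond r n \<pi> \<rho> \<longleftrightarrow> length_sum {1..n} \<pi> = sor r n \<rho>
     \<and> (\<forall>t<r. Rmil n \<pi> t = Cyc r n \<rho> ((r - t) mod r))
     \<and> (n \<ge> 1 \<longrightarrow> (\<forall>t<r. Lmil n \<pi> t = Lmic r \<rho> ((r - t) mod r)))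
     \<and> lr_maxima n \<pi> = neg_color r ` lr_maxima n \<rho>"

lemma stats_correspond_refl_0: "stats_correspond r 0 \<pi> \<pi>"
  by (simp add: stats_correspond_def length_sum_def sor_def Rmil_def Cyc_def lr_maxima_def)

lemma stats_correspond_insert:
  assumes r: "r \<ge> 1" and n: "n \<ge> 1" and \<pi>: "\<pi> \<in> Grn r (n-1)" and \<rho>: "\<rho> \<in> Grn r (n-1)"
    and corr: "stats_correspond r (n-1) \<pi> \<rho>" and c: "c \<in> {1..n}" and e: "e < r"
  shows "stats_correspond r n (insert_shift n \<pi> c e) (insert_swap r n \<rho> c e)"
proof -
  have "length_sum {1..n} (insert_shift n \<pi> c e) = sor r n (insert_swap r n \<rho> c e)"
    using length_sum_insert_shift[OF \<pi> c, of e] sor_insert_swap[OF \<rho> c e r] corr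
    by (simp add: stats_correspond_def)
  moreover have "Rmil n (insert_shift n \<pi> c e) t = Cyc r n (insert_swap r n \<rho> c e) ((r - t) mod r)"
    if "t < r" for t
    using Rmil_insert_shift[OF \<pi> c] Cyc_insert_swap[OF \<rho> c e r] corr that neg_mod_inj[OF e that]
    by (simp add: stats_correspond_def)
  moreover have "Lmil n (insert_shift n \<pi> c e) t = Lmic r (insert_swap r n \<rho> c e) ((r - t) mod r)"
    if t: "t < r" for t
  proof (cases "n = 1")
    case True
    then have "c = 1" using c by simp
    then show ?thesis
      using Lmil_insert_shift[OF \<pi> c] Lmic_insert_swap_one[of \<rho> r e] \<rho> e r True neg_mod_inj[OF e t]
      by (simp add: Lmil_def)
  next
    case False
    then show ?thesis
      using Lmil_insert_shift[OF \<pi> c] Lmic_insert_swap[OF \<rho> c e r] corr n t neg_mod_inj[OF e t]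
      by (simp add: stats_correspond_def)
  qed
  moreover have "lr_maxima n (insert_shift n \<pi> c e) = neg_color r ` lr_maxima n (insert_swap r n \<rho> c e)"
  proof -
    have "neg_color r ` lr_maxima n (insert_swap r n \<rho> c e)
        = neg_color r ` ({x \<in> lr_maxima (n-1) \<rho>. fst x < c} \<union> {(c, n, (r - e) mod r)})"
      using lr_maxima_insert_swap[OF \<rho> c] by simp
    also have "\<dots> = {x \<in> neg_color r ` lr_maxima (n-1) \<rho>. fst x < c} \<union> {(c, n, e)}"
      using neg_mod_neg_mod[OF e] by (auto simp: neg_color_def image_iff)
    also have "neg_color r ` lr_maxima (n-1) \<rho> = lr_maxima (n-1) \<pi>"
      using corr by (simp add: stats_correspond_def)
    finally show ?thesis using lr_maxima_insert_shift[OF \<pi> c] by simp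
  qed
  ultimately show ?thesis using n by (simp add: stats_correspond_def)
qed

lemma exists_bij_stats_correspond:
  assumes r: "r \<ge> 1"
  shows "\<forall>i\<in>{1..n}. \<forall>j\<in>{1..n}. i \<le> j \<longrightarrow> f i \<le> f j \<Longrightarrow>
    \<exists>h. bij_betw h (Grnf r n f) (Grnf r n f) \<and> (\<forall>\<pi>\<in>Grnf r n f. stats_correspond r n \<pi> (h \<pi>))"
proof (induction n)
  case 0
  show ?case by (intro exI[of _ id] conjI bij_betw_id) (simp add: stats_correspond_refl_0)
next
  case (Suc m)
  define n where "n = Suc m"
  have mono: "\<forall>i\<in>{1..n}. \<forall>j\<in>{1..n}. i \<le> j \<longrightarrow> f i \<le> f j" using Suc.prems n_def by simp
  have "\<forall>i\<in>{1..m}. \<forall>j\<in>{1..m}. i \<le> j \<longrightarrow> f i \<le> f j" using Suc.prems by simp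
  then obtain h' where h': "bij_betw h' (Grnf r m f) (Grnf r m f)"
    "\<forall>\<pi>\<in>Grnf r m f. stats_correspond r m \<pi> (h' \<pi>)"
    using Suc.IH by blast
  have n: "n \<ge> 1" "m = n - 1" using n_def by simp_all
  define h where "h = (\<lambda>(\<pi>, c, e). insert_swap r n \<pi> c e) \<circ> (map_prod h' id \<circ> remove_shift n)"
  have "bij_betw (map_prod h' id) (insertion_data r n f) (insertion_data r n f)"
    unfolding insertion_data_def n(2)[symmetric] by (rule bij_betw_map_prod[OF h'(1) bij_betw_id])
  then have "bij_betw h (Grnf r n f) (Grnf r n f)"
    unfolding h_def
    by (rule bij_betw_trans[OF bij_betw_trans[OF bij_betw_remove_shift[OF r n(1) mono]]
          bij_betw_insert_swap[OF r n(1) mono]])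
  moreover have "stats_correspond r n \<pi> (h \<pi>)" if \<pi>: "\<pi> \<in> Grnf r n f" for \<pi>
  proof -
    obtain \<pi>' c e where rem: "remove_shift n \<pi> = (\<pi>', c, e)" by (metis prod.collapse)
    have "(\<pi>', c, e) \<in> insertion_data r n f"
      using remove_shift_in_insertion_data[OF r n(1) mono \<pi>] rem by simp
    then have \<pi>': "\<pi>' \<in> Grnf r m f" "h' \<pi>' \<in> Grnf r m f" and c: "c \<in> {1..n}" and e: "e < r"
      using h'(1) n(2) by (auto simp: insertion_data_def bij_betw_def)
    have "\<pi> = insert_shift n \<pi>' c e" using insert_remove_shift[OF \<pi> n(1)] rem by simp
    moreover have "h \<pi> = insert_swap r n (h' \<pi>') c e" by (simp add: h_def rem)
    moreover have "stats_correspond r n (insert_shift n \<pi>' c e) (insert_swap r n (h' \<pi>') c e)"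
      using stats_correspond_insert[OF r n(1) _ _ _ c e] \<pi>' h'(2) Grnf_subset_Grn n(2) by blast
    ultimately show ?thesis by simp
  qed
  ultimately show ?case unfolding n_def by blast
qed

lemma neg_color_mem_iff:
  assumes "\<pi> \<in> Grn r n" "r \<ge> 1" "t < r"
  shows "(p, v, t) \<in> neg_color r ` lr_maxima n \<pi> \<longleftrightarrow> (p, v, (r - t) mod r) \<in> lr_maxima n \<pi>"
proof
  assume "(p, v, t) \<in> neg_color r ` lr_maxima n \<pi>"
  then obtain x where x: "x \<in> lr_maxima n \<pi>" "(p, v, t) = neg_color r x" by blast
  have "snd (snd x) < r" using x(1) Grn_color_less[OF assms(1,2)] by (auto simp: lr_maxima_def)
  then have "snd (snd x) = (r - t) mod r" using x(2) neg_mod_neg_mod by (simp add: neg_color_def)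
  then show "(p, v, (r - t) mod r) \<in> lr_maxima n \<pi>" using x by (cases x) (simp add: neg_color_def)
next
  assume "(p, v, (r - t) mod r) \<in> lr_maxima n \<pi>"
  moreover have "neg_color r (p, v, (r - t) mod r) = (p, v, t)"
    using neg_mod_neg_mod[OF assms(3)] by (simp add: neg_color_def)
  ultimately show "(p, v, t) \<in> neg_color r ` lr_maxima n \<pi>" by (metis image_eqI)
qed

lemma tuple1_eq_tuple2_if_stats_correspond:
  assumes \<pi>: "\<pi> \<in> Grn r n" and \<rho>: "\<rho> \<in> Grn r n" and corr: "stats_correspond r n \<pi> \<rho>"
    and r: "r \<ge> 1" and n: "n \<ge> 1"
  shows "tuple1 r n \<pi> = tuple2 r n \<rho>"
proof -
  have down: "colors_down r = map (\<lambda>t. (r - t) mod r) (colors_up r)"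
    by (simp add: colors_down_def colors_up_def)
  have lr: "lr_maxima n \<pi> = neg_color r ` lr_maxima n \<rho>" using corr by (simp add: stats_correspond_def)
  have "clength r n \<pi> = sor r n \<rho>"
    using clength_eq_length_sum[OF \<pi> r n] corr by (simp add: stats_correspond_def)
  moreover have "map (Rmil n \<pi>) (colors_up r) = map (Cyc r n \<rho>) (colors_down r)"
    "map (Lmil n \<pi>) (colors_up r) = map (Lmic r \<rho>) (colors_down r)"
    unfolding down map_map using corr n by (auto simp: stats_correspond_def colors_up_def)
  moreover have "map (Lmal n \<pi>) (colors_up r) = map (Lmal n \<rho>) (colors_down r)"
    "map (Lmap n \<pi>) (colors_up r) = map (Lmap n \<rho>) (colors_down r)"
    unfolding down map_map Lmal_eq_lr_maxima Lmap_eq_lr_maxima lr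
    using neg_color_mem_iff[OF \<rho> r] by (auto simp: colors_up_def)
  ultimately show ?thesis unfolding tuple1_def tuple2_def by simp
qed

lemma card_fibers_eq_if_bij:
  assumes h: "bij_betw h A A" and eq: "\<forall>x\<in>A. G (h x) = F x"
  shows "card {x \<in> A. F x = v} = card {x \<in> A. G x = v}"
proof (rule bij_betw_same_card[of h], rule bij_betw_imageI)
  show "inj_on h {x \<in> A. F x = v}" using h by (auto simp: bij_betw_def intro: inj_on_subset)
  show "h ` {x \<in> A. F x = v} = {x \<in> A. G x = v}"
  proof
    show "h ` {x \<in> A. F x = v} \<subseteq> {x \<in> A. G x = v}" using h eq by (auto simp: bij_betw_def)
    show "{x \<in> A. G x = v} \<subseteq> h ` {x \<in> A. F x = v}"
    proof
      fix y assume y: "y \<in> {x \<in> A. G x = v}"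
      then obtain x where "x \<in> A" "y = h x" using h by (auto simp: bij_betw_def)
      then show "y \<in> h ` {x \<in> A. F x = v}" using y eq by auto
    qed
  qed
qed

theorem theoremA:
  fixes r n :: nat and f :: "nat \<Rightarrow> nat"
  assumes "r \<ge> 1" and "n \<ge> 1"
    and "\<forall>i\<in>{1..n}. 1 \<le> f i \<and> f i \<le> n"
    and "\<forall>i\<in>{1..n}. \<forall>j\<in>{1..n}. i \<le> j \<longrightarrow> f i \<le> f j"
  shows "\<forall>v. card {\<pi> \<in> Grnf r n f. tuple1 r n \<pi> = v} = card {\<pi> \<in> Grnf r n f. tuple2 r n \<pi> = v}"
proof
  fix v
  obtain h where h: "bij_betw h (Grnf r n f) (Grnf r n f)" "\<forall>\<pi>\<in>Grnf r n f. stats_correspond r n \<pi> (h \<pi>)"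
    using exists_bij_stats_correspond[OF assms(1,4)] by blast
  have "\<forall>\<pi>\<in>Grnf r n f. tuple2 r n (h \<pi>) = tuple1 r n \<pi>"
  proof
    fix \<pi> assume \<pi>: "\<pi> \<in> Grnf r n f"
    then have "h \<pi> \<in> Grnf r n f" using bij_betw_apply[OF h(1)] by blast
    then show "tuple2 r n (h \<pi>) = tuple1 r n \<pi>"
      using tuple1_eq_tuple2_if_stats_correspond \<pi> h(2) Grnf_subset_Grn assms(1,2) by (metis subsetD)
  qed
  then show "card {\<pi> \<in> Grnf r n f. tuple1 r n \<pi> = v} = card {\<pi> \<in> Grnf r n f. tuple2 r n \<pi> = v}"
    by (rule card_fibers_eq_if_bij[OF h(1)])
qed

end
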